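(* Let $V$ be an operator space which is $\lambda$-subcoexact for some $\lambda<\infty$. If $\boldsymbol{K}$ is a completely compact matrix set in $V$, then $\boldsymbol{K}$ is operator compact.
   Context: Operator spaces are abstract (matrix normed) operator spaces. $\mathcal{T}_n$ denotes the trace class operators on $\mathbb{C}^n$ with the operator space structure of the dual of $M_n$; quotients carry the quotient operator space structure. For finite dimensional operator spaces $X,Y$, $d_{cb}(X,Y)=\inf\{\|\varphi\|_{cb}\|\varphi^{-1}\|_{cb}:\varphi:X\to Y \text{ a complete isomorphism}\}$. A finite dimensional operator space $X$ is $\lambda$-coexact if for every $\varepsilon>0$ there are $n$ and a subspace $W\subseteq\mathcal{T}_n$ with $d_{cb}(X,\mathcal{T}_n/W)<\lambda+\varepsilon$. An operator space $V$ is $\lambda$-subcoexact if every finite dimensional subspace of $V$ is contained in a finite dimensional subspace of $V$ which is $\lambda$-coexact. A matrix set $\boldsymbol{K}=(K_n)$ in $V$ is a sequence of subsets $K_n\subseteq M_n(V)$; closed if each $K_n$ is closed; completely bounded if $\sup\{\|x\|_n:x\in K_n,n\in\mathbb{N}\}<\infty$. $\boldsymbol{K}$ is completely compact if it is closed, completely bounded, and for every $\varepsilon>0$ there is a finite dimensional subspace $V_\varepsilon\subseteq V$ such that every $x\in K_n$ (any $n$) lies within distance $<\varepsilon$ of $M_n(V_\varepsilon)$. $\mathcal{K}$ denotes the compact operators on $\ell^2$, $\mathcal{K}(V)=\mathcal{K}\check{\otimes}V$ (operator-space minimal tensor product, the completion of $M_\infty(V)$, finitely supported infinite matrices over $V$).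 $\mathcal{T}$ is the trace class on $\ell^2$ as the operator space dual of $\mathcal{K}$, $M_k(\mathcal{T})\cong\mathcal{CB}(\mathcal{K},M_k)$ with norm $\|\cdot\|_{\mathcal{T}}$, $M_\infty\subseteq\mathcal{T}$, and $(\sigma\otimes\mathrm{id})(x)\in M_k(V)$ is the slice map for $\sigma\in M_k(\mathcal{T})$, $x\in\mathcal{K}(V)$. The absolutely matrix convex hull of $x\in\mathcal{K}(V)$ has $k$-th level $\{(\sigma\otimes\mathrm{id})(x):\sigma\in M_k(M_\infty),\|\sigma\|_{\mathcal{T}}\le1\}$. $\boldsymbol{K}$ is operator compact if it is closed and there is $x\in\mathcal{K}(V)$ with each $K_k$ contained in the closure of the $k$-th level of the absolutely matrix convex hull of $x$. *)

theory Defs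
  imports Complex_Main
begin

text \<open>A matrix is a function nat => nat => _; only a finite corner is relevant.
  cmat_norm m n A is the operator norm of the m x n complex matrix A acting
  from l2^n to l2^m.\<close>

definition cmat_norm :: "nat \<Rightarrow> nat \<Rightarrow> (nat \<Rightarrow> nat \<Rightarrow> complex) \<Rightarrow> real" where
  "cmat_norm m n A = Sup {sqrt (\<Sum>i<m. (cmod (\<Sum>j<n. A i j * x j))\<^sup>2) | x.
        (\<Sum>j<n. (cmod (x j))\<^sup>2) \<le> 1}"

definition mat_sp :: "nat \<Rightarrow> (nat \<Rightarrow> nat \<Rightarrow> 'v::zero) set" where
  "mat_sp n = {x. \<forall>i j. (n \<le> i \<or> n \<le> j) \<longrightarrow> x i j = 0}"

definition dsum :: "nat \<Rightarrow> nat \<Rightarrow> (nat \<Rightarrow> nat \<Rightarrow> 'v::zero) \<Rightarrow> (nat \<Rightarrow> nat \<Rightarrow> 'v) \<Rightarrow> nat \<Rightarrow> nat \<Rightarrow> 'v" where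
  "dsum n m x y = (\<lambda>i j. if i < n \<and> j < n then x i j
       else if n \<le> i \<and> n \<le> j \<and> i < n + m \<and> j < n + m then y (i - n) (j - n) else 0)"

definition mat_mult3 :: "(complex \<Rightarrow> 'v \<Rightarrow> 'v::ab_group_add) \<Rightarrow> nat \<Rightarrow> nat \<Rightarrow>
    (nat \<Rightarrow> nat \<Rightarrow> complex) \<Rightarrow> (nat \<Rightarrow> nat \<Rightarrow> 'v) \<Rightarrow> (nat \<Rightarrow> nat \<Rightarrow> complex) \<Rightarrow> nat \<Rightarrow> nat \<Rightarrow> 'v" where
  "mat_mult3 sc m n \<alpha> x \<beta> = (\<lambda>i j. if i < m \<and> j < m then
       (\<Sum>p<n. \<Sum>q<n. sc (\<alpha> i p * \<beta> q j) (x p q)) else 0)"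

text \<open>An (abstract) operator space: a complex vector space (scalar multiplication sc)
  with norms mn n on each M_n(V) satisfying Ruan's axioms.\<close>
definition operator_space :: "(complex \<Rightarrow> 'v \<Rightarrow> 'v::ab_group_add) \<Rightarrow> (nat \<Rightarrow> (nat \<Rightarrow> nat \<Rightarrow> 'v) \<Rightarrow> real) \<Rightarrow> bool" where
  "operator_space sc mn \<longleftrightarrow>
     vector_space sc \<and>
     (\<forall>n. \<forall>x\<in>mat_sp n. 0 \<le> mn n x \<and> (mn n x = 0 \<longrightarrow> x = (\<lambda>i j. 0))) \<and>
     (\<forall>n. \<forall>x\<in>mat_sp n. \<forall>y\<in>mat_sp n. mn n (\<lambda>i j. x i j + y i j) \<le> mn n x + mn n y) \<and>
     (\<forall>n c. \<forall>x\<in>mat_sp n. mn n (\<lambda>i j. sc c (x i j)) = cmod c * mn n x) \<and>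
     (\<forall>n m. \<forall>x\<in>mat_sp n. \<forall>y\<in>mat_sp m. mn (n + m) (dsum n m x y) = max (mn n x) (mn m y)) \<and>
     (\<forall>n m \<alpha> \<beta>. \<forall>x\<in>mat_sp n.
        mn m (mat_mult3 sc m n \<alpha> x \<beta>) \<le> cmat_norm m n \<alpha> * mn n x * cmat_norm n m \<beta>)"

definition fin_dim_subspace :: "(complex \<Rightarrow> 'v \<Rightarrow> 'v::ab_group_add) \<Rightarrow> 'v set \<Rightarrow> bool" where
  "fin_dim_subspace sc X \<longleftrightarrow> module.subspace sc X \<and> (\<exists>B. finite B \<and> X = module.span sc B)"

text \<open>An element sigma of M_k(M_N) (i.e. a k x k matrix of N x N matrices, as a map
  r s p q), identified with the map M_N -> M_k, a |-> [sum_pq sigma r s p q * a p q]_rs.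
  Its l-th amplification acts on a in M_l(M_N) = M_(l*N) (block (u,v) entry (p,q) at
  index (u*N+p, v*N+q)).\<close>
definition ampl :: "nat \<Rightarrow> nat \<Rightarrow> (nat \<Rightarrow> nat \<Rightarrow> nat \<Rightarrow> nat \<Rightarrow> complex) \<Rightarrow>
     (nat \<Rightarrow> nat \<Rightarrow> complex) \<Rightarrow> nat \<Rightarrow> nat \<Rightarrow> complex" where
  "ampl N k \<sigma> a = (\<lambda>i j. \<Sum>p<N. \<Sum>q<N.
       \<sigma> (i mod k) (j mod k) p q * a ((i div k) * N + p) ((j div k) * N + q))"

text \<open>Norm of sigma in M_k(T_N) = CB(M_N, M_k): the completely bounded norm.\<close>
definition tnorm :: "nat \<Rightarrow> nat \<Rightarrow> (nat \<Rightarrow> nat \<Rightarrow> nat \<Rightarrow> nat \<Rightarrow> complex) \<Rightarrow> real" where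
  "tnorm N k \<sigma> = Sup {cmat_norm (l * k) (l * k) (ampl N k \<sigma> a) | l a.
        1 \<le> l \<and> cmat_norm (l * N) (l * N) a \<le> 1}"

definition Tn :: "nat \<Rightarrow> (nat \<Rightarrow> nat \<Rightarrow> complex) set" where
  "Tn n = {t. \<forall>p q. (n \<le> p \<or> n \<le> q) \<longrightarrow> t p q = 0}"

definition csubspace_Tn :: "nat \<Rightarrow> (nat \<Rightarrow> nat \<Rightarrow> complex) set \<Rightarrow> bool" where
  "csubspace_Tn n W \<longleftrightarrow> W \<subseteq> Tn n \<and> (\<lambda>p q. 0) \<in> W \<and>
     (\<forall>s\<in>W. \<forall>t\<in>W. (\<lambda>p q. s p q + t p q) \<in> W) \<and>
     (\<forall>c. \<forall>t\<in>W. (\<lambda>p q. c * t p q) \<in> W)"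

text \<open>Quotient norm on M_m(T_n/W) = M_m(T_n)/M_m(W).\<close>
definition qnorm :: "nat \<Rightarrow> (nat \<Rightarrow> nat \<Rightarrow> complex) set \<Rightarrow> nat \<Rightarrow>
     (nat \<Rightarrow> nat \<Rightarrow> nat \<Rightarrow> nat \<Rightarrow> complex) \<Rightarrow> real" where
  "qnorm n W m \<tau> = Inf {tnorm n m (\<lambda>r s p q. \<tau> r s p q - w r s p q) | w.
        \<forall>r<m. \<forall>s<m. w r s \<in> W}"

text \<open>d_cb(X, T_n/W) < c, written out: there is a linear isomorphism X -> T_n/W
  (given by a linear lift phi : X -> T_n) with ||phi||_cb ||phi^-1||_cb < c.\<close>
definition dcb_Tquot_less :: "(complex \<Rightarrow> 'v \<Rightarrow> 'v::ab_group_add) \<Rightarrow> (nat \<Rightarrow> (nat \<Rightarrow> nat \<Rightarrow> 'v) \<Rightarrow> real) \<Rightarrow>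
     'v set \<Rightarrow> nat \<Rightarrow> (nat \<Rightarrow> nat \<Rightarrow> complex) set \<Rightarrow> real \<Rightarrow> bool" where
  "dcb_Tquot_less sc mn X n W c \<longleftrightarrow>
     (\<exists>\<phi> A B.
        (\<forall>x\<in>X. \<phi> x \<in> Tn n) \<and>
        (\<forall>x\<in>X. \<forall>y\<in>X. \<phi> (x + y) = (\<lambda>p q. \<phi> x p q + \<phi> y p q)) \<and>
        (\<forall>a. \<forall>x\<in>X. \<phi> (sc a x) = (\<lambda>p q. a * \<phi> x p q)) \<and>
        (\<forall>x\<in>X. \<phi> x \<in> W \<longrightarrow> x = 0) \<and>
        (\<forall>t\<in>Tn n. \<exists>x\<in>X. (\<lambda>p q. t p q - \<phi> x p q) \<in> W) \<and>
        A * B < c \<and>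
        (\<forall>m x. 1 \<le> m \<longrightarrow> x \<in> mat_sp m \<longrightarrow> (\<forall>i j. x i j \<in> X) \<longrightarrow>
           qnorm n W m (\<lambda>r s. \<phi> (x r s)) \<le> A * mn m x \<and>
           mn m x \<le> B * qnorm n W m (\<lambda>r s. \<phi> (x r s))))"

definition coexact :: "(complex \<Rightarrow> 'v \<Rightarrow> 'v::ab_group_add) \<Rightarrow> (nat \<Rightarrow> (nat \<Rightarrow> nat \<Rightarrow> 'v) \<Rightarrow> real) \<Rightarrow>
     real \<Rightarrow> 'v set \<Rightarrow> bool" where
  "coexact sc mn lam X \<longleftrightarrow>
     (\<forall>\<epsilon>>0. \<exists>n W. csubspace_Tn n W \<and> dcb_Tquot_less sc mn X n W (lam + \<epsilon>))"

definition subcoexact :: "(complex \<Rightarrow> 'v \<Rightarrow> 'v::ab_group_add) \<Rightarrow> (nat \<Rightarrow> (nat \<Rightarrow> nat \<Rightarrow> 'v) \<Rightarrow> real) \<Rightarrow>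
     real \<Rightarrow> bool" where
  "subcoexact sc mn lam \<longleftrightarrow>
     (\<forall>F. fin_dim_subspace sc F \<longrightarrow>
        (\<exists>G. fin_dim_subspace sc G \<and> F \<subseteq> G \<and> coexact sc mn lam G))"

text \<open>A matrix set K: K n is a subset of M_n(V), n >= 1 (K 0 is ignored).\<close>
definition matrix_set :: "(nat \<Rightarrow> (nat \<Rightarrow> nat \<Rightarrow> 'v::zero) set) \<Rightarrow> bool" where
  "matrix_set K \<longleftrightarrow> (\<forall>n\<ge>1. K n \<subseteq> mat_sp n)"

definition mclosure :: "(nat \<Rightarrow> (nat \<Rightarrow> nat \<Rightarrow> 'v::ab_group_add) \<Rightarrow> real) \<Rightarrow> nat \<Rightarrow>
     (nat \<Rightarrow> nat \<Rightarrow> 'v) set \<Rightarrow> (nat \<Rightarrow> nat \<Rightarrow> 'v) set" where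
  "mclosure mn n S = {y \<in> mat_sp n. \<forall>e>0. \<exists>x\<in>S. mn n (\<lambda>i j. x i j - y i j) < e}"

definition mclosed :: "(nat \<Rightarrow> (nat \<Rightarrow> nat \<Rightarrow> 'v::ab_group_add) \<Rightarrow> real) \<Rightarrow>
     (nat \<Rightarrow> (nat \<Rightarrow> nat \<Rightarrow> 'v) set) \<Rightarrow> bool" where
  "mclosed mn K \<longleftrightarrow> (\<forall>n\<ge>1. mclosure mn n (K n) \<subseteq> K n)"

definition completely_bounded :: "(nat \<Rightarrow> (nat \<Rightarrow> nat \<Rightarrow> 'v::ab_group_add) \<Rightarrow> real) \<Rightarrow>
     (nat \<Rightarrow> (nat \<Rightarrow> nat \<Rightarrow> 'v) set) \<Rightarrow> bool" where
  "completely_bounded mn K \<longleftrightarrow> (\<exists>C. \<forall>n\<ge>1. \<forall>x\<in>K n. mn n x \<le> C)"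

definition completely_compact :: "(complex \<Rightarrow> 'v \<Rightarrow> 'v::ab_group_add) \<Rightarrow>
     (nat \<Rightarrow> (nat \<Rightarrow> nat \<Rightarrow> 'v) \<Rightarrow> real) \<Rightarrow> (nat \<Rightarrow> (nat \<Rightarrow> nat \<Rightarrow> 'v) set) \<Rightarrow> bool" where
  "completely_compact sc mn K \<longleftrightarrow> mclosed mn K \<and> completely_bounded mn K \<and>
     (\<forall>\<epsilon>>0. \<exists>V\<epsilon>. fin_dim_subspace sc V\<epsilon> \<and>
        (\<forall>n\<ge>1. \<forall>x\<in>K n. \<exists>y\<in>mat_sp n. (\<forall>i j. y i j \<in> V\<epsilon>) \<and>
            mn n (\<lambda>i j. x i j - y i j) < \<epsilon>))"

definition trunc :: "nat \<Rightarrow> (nat \<Rightarrow> nat \<Rightarrow> 'v::zero) \<Rightarrow> nat \<Rightarrow> nat \<Rightarrow> 'v" where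
  "trunc N x = (\<lambda>i j. if i < N \<and> j < N then x i j else 0)"

text \<open>K(V), the completion of M_infinity(V), represented by infinite matrices over V
  whose finite truncations form a Cauchy sequence (they then converge to the element).\<close>
definition KV :: "(nat \<Rightarrow> (nat \<Rightarrow> nat \<Rightarrow> 'v::ab_group_add) \<Rightarrow> real) \<Rightarrow> (nat \<Rightarrow> nat \<Rightarrow> 'v) set" where
  "KV mn = {x. \<forall>e>0. \<exists>N0. \<forall>N M. N0 \<le> N \<longrightarrow> N \<le> M \<longrightarrow>
        mn M (\<lambda>i j. trunc M x i j - trunc N x i j) < e}"

text \<open>Slice map (sigma (x) id)(x) in M_k(V), for sigma in M_k(M_N) (supported in N x N).\<close>
definition slice :: "(complex \<Rightarrow> 'v \<Rightarrow> 'v::ab_group_add) \<Rightarrow> nat \<Rightarrow> nat \<Rightarrow>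
     (nat \<Rightarrow> nat \<Rightarrow> nat \<Rightarrow> nat \<Rightarrow> complex) \<Rightarrow> (nat \<Rightarrow> nat \<Rightarrow> 'v) \<Rightarrow> nat \<Rightarrow> nat \<Rightarrow> 'v" where
  "slice sc k N \<sigma> x = (\<lambda>r s. if r < k \<and> s < k then (\<Sum>p<N. \<Sum>q<N. sc (\<sigma> r s p q) (x p q)) else 0)"

text \<open>k-th level of the absolutely matrix convex hull of x:
  slices by sigma in M_k(M_infinity) with ||sigma||_T <= 1.\<close>
definition amc_hull :: "(complex \<Rightarrow> 'v \<Rightarrow> 'v::ab_group_add) \<Rightarrow> nat \<Rightarrow> (nat \<Rightarrow> nat \<Rightarrow> 'v) \<Rightarrow>
     (nat \<Rightarrow> nat \<Rightarrow> 'v) set" where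
  "amc_hull sc k x = {slice sc k N \<sigma> x | N \<sigma>.
      (\<forall>r s p q. r < k \<longrightarrow> s < k \<longrightarrow> (N \<le> p \<or> N \<le> q) \<longrightarrow> \<sigma> r s p q = 0) \<and>
      tnorm N k \<sigma> \<le> 1}"

definition operator_compact :: "(complex \<Rightarrow> 'v \<Rightarrow> 'v::ab_group_add) \<Rightarrow>
     (nat \<Rightarrow> (nat \<Rightarrow> nat \<Rightarrow> 'v) \<Rightarrow> real) \<Rightarrow> (nat \<Rightarrow> (nat \<Rightarrow> nat \<Rightarrow> 'v) set) \<Rightarrow> bool" where
  "operator_compact sc mn K \<longleftrightarrow> mclosed mn K \<and>
     (\<exists>x\<in>KV mn. \<forall>k\<ge>1. K k \<subseteq> mclosure mn k (amc_hull sc k x))"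

end

theory Submission
  imports Defs "HOL-Analysis.L2_Norm"
begin

text \<open>Choose finite dimensional subspaces V_b approximating K to within 4^-b and, by
  subcoexactness, finite dimensional G_b containing V_b and V_(b+1) which are (lam+1)-close to
  quotients of some T_(n_b). Such a quotient map is encoded by the matrix e_b in M_(n_b)(G_b) of
  images of the matrix units: every d in M_k(G_b) is a slice of e_b by coefficients of T-norm
  about (lam+1) times the norm of d. The block diagonal matrix x with blocks 2^-b e_b lies in
  K(V). An element y of K_k is the telescoping sum of the increments of its approximants, which
  have norm O(4^-b); lifting the increments through the e_b and dividing by the weights 2^-b
  gives coefficients of total T-norm at most 1, so the partial sums lie in the absolutely matrix
  convex hull of x and converge to y.\<close>

section \<open>Operator norms of complex matrices\<close>

definition cmat_apply :: "nat \<Rightarrow> (nat \<Rightarrow> nat \<Rightarrow> complex) \<Rightarrow> (nat \<Rightarrow> complex) \<Rightarrow> nat \<Rightarrow> complex" where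
  "cmat_apply n A x = (\<lambda>i. \<Sum>j<n. A i j * x j)"

definition cvec_norm :: "nat \<Rightarrow> (nat \<Rightarrow> complex) \<Rightarrow> real" where
  "cvec_norm n x = L2_set (\<lambda>j. cmod (x j)) {..<n}"

lemma cmat_norm_eq_Sup:
  "cmat_norm m n A = Sup {cvec_norm m (cmat_apply n A x) | x. cvec_norm n x \<le> 1}"
  unfolding cmat_norm_def cvec_norm_def cmat_apply_def L2_set_def by simp

lemma cvec_norm_zero [simp]: "cvec_norm n (\<lambda>_. 0) = 0"
  by (simp add: cvec_norm_def L2_set_def)

lemma cvec_norm_nonneg: "0 \<le> cvec_norm n x"
  by (simp add: cvec_norm_def)

lemma cmat_apply_bound:
  assumes "cvec_norm n x \<le> 1"
  shows "cvec_norm m (cmat_apply n A x) \<le> (\<Sum>i<m. \<Sum>j<n. cmod (A i j))"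
proof -
  have "cmod (x j) \<le> 1" if "j < n" for j
    using member_le_L2_set[of "{..<n}" j "\<lambda>j. cmod (x j)"] that assms
    by (simp add: cvec_norm_def)
  then have "cmod (cmat_apply n A x i) \<le> (\<Sum>j<n. cmod (A i j))" for i
    unfolding cmat_apply_def
    by (intro order_trans[OF norm_sum] sum_mono) (simp add: norm_mult mult_left_le)
  then have "cvec_norm m (cmat_apply n A x) \<le> L2_set (\<lambda>i. \<Sum>j<n. cmod (A i j)) {..<m}"
    unfolding cvec_norm_def by (intro L2_set_mono) auto
  also have "\<dots> \<le> (\<Sum>i<m. \<Sum>j<n. cmod (A i j))"
    by (rule L2_set_le_sum) (simp add: sum_nonneg)
  finally show ?thesis .
qed

lemma cmat_norm_upper:
  assumes "cvec_norm n x \<le> 1"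
  shows "cvec_norm m (cmat_apply n A x) \<le> cmat_norm m n A"
proof -
  have "bdd_above {cvec_norm m (cmat_apply n A x) | x. cvec_norm n x \<le> 1}"
    unfolding bdd_above_def using cmat_apply_bound by blast
  then show ?thesis
    unfolding cmat_norm_eq_Sup by (rule cSup_upper[rotated]) (use assms in blast)
qed

lemma cmat_norm_least:
  assumes "\<And>x. cvec_norm n x \<le> 1 \<Longrightarrow> cvec_norm m (cmat_apply n A x) \<le> c"
  shows "cmat_norm m n A \<le> c"
  unfolding cmat_norm_eq_Sup
proof (rule cSup_least)
  have "cvec_norm n (\<lambda>_. 0) \<le> 1" by simp
  then show "{cvec_norm m (cmat_apply n A x) | x. cvec_norm n x \<le> 1} \<noteq> {}" by blast
qed (use assms in blast)

lemma cmat_norm_nonneg: "0 \<le> cmat_norm m n A"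
  by (rule order_trans[OF cvec_norm_nonneg cmat_norm_upper[of n "\<lambda>_. 0"]]) simp

lemma cmat_norm_zero_le: "cmat_norm m n (\<lambda>i j. 0) \<le> 0"
  by (rule cmat_norm_least) (simp add: cmat_apply_def)

lemma cmat_norm_add_le:
  "cmat_norm m n (\<lambda>i j. A i j + B i j) \<le> cmat_norm m n A + cmat_norm m n B"
proof (rule cmat_norm_least)
  fix x assume x: "cvec_norm n x \<le> 1"
  have "cvec_norm m (cmat_apply n (\<lambda>i j. A i j + B i j) x)
      = L2_set (\<lambda>i. cmod (cmat_apply n A x i + cmat_apply n B x i)) {..<m}"
    unfolding cvec_norm_def cmat_apply_def by (simp add: distrib_right sum.distrib)
  also have "\<dots> \<le> L2_set (\<lambda>i. cmod (cmat_apply n A x i) + cmod (cmat_apply n B x i)) {..<m}"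
    by (rule L2_set_mono) (auto simp: norm_triangle_ineq)
  also have "\<dots> \<le> cvec_norm m (cmat_apply n A x) + cvec_norm m (cmat_apply n B x)"
    unfolding cvec_norm_def by (rule L2_set_triangle_ineq)
  also have "\<dots> \<le> cmat_norm m n A + cmat_norm m n B"
    using cmat_norm_upper[OF x] by (simp add: add_mono)
  finally show "cvec_norm m (cmat_apply n (\<lambda>i j. A i j + B i j) x) \<le> \<dots>" .
qed

lemma cmat_norm_scale_le: "cmat_norm m n (\<lambda>i j. c * A i j) \<le> cmod c * cmat_norm m n A"
proof (rule cmat_norm_least)
  fix x assume x: "cvec_norm n x \<le> 1"
  have "cvec_norm m (cmat_apply n (\<lambda>i j. c * A i j) x) = cmod c * cvec_norm m (cmat_apply n A x)"
    unfolding cvec_norm_def cmat_apply_def L2_set_right_distrib[OF norm_ge_zero]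
    by (rule L2_set_cong) (auto simp: mult.assoc sum_distrib_left[symmetric] norm_mult)
  also have "\<dots> \<le> cmod c * cmat_norm m n A"
    using cmat_norm_upper[OF x] by (simp add: mult_left_mono)
  finally show "cvec_norm m (cmat_apply n (\<lambda>i j. c * A i j) x) \<le> cmod c * cmat_norm m n A" .
qed

lemma cmat_norm_sum_le:
  assumes "finite S"
  shows "cmat_norm m n (\<lambda>i j. \<Sum>b\<in>S. A b i j) \<le> (\<Sum>b\<in>S. cmat_norm m n (A b))"
  using assms
proof (induction S rule: finite_induct)
  case empty
  then show ?case using cmat_norm_zero_le by simp
next
  case (insert a S)
  then show ?case
    using cmat_norm_add_le[of m n "A a" "\<lambda>i j. \<Sum>b\<in>S. A b i j"] by simp
qed

lemma cmat_norm_identity_le: "cmat_norm n n (\<lambda>i j. if i = j then 1 else 0) \<le> 1"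
proof (rule cmat_norm_least)
  fix x assume "cvec_norm n x \<le> 1"
  moreover have "cmat_apply n (\<lambda>i j. if i = j then 1 else 0) x i = x i" if "i < n" for i
    using that unfolding cmat_apply_def by (simp add: if_distrib[of "\<lambda>c. c * _"] cong: if_cong)
  ultimately show "cvec_norm n (cmat_apply n (\<lambda>i j. if i = j then 1 else 0) x) \<le> 1"
    unfolding cvec_norm_def by (metis (no_types, lifting) L2_set_cong lessThan_iff)
qed

lemma cvec_relabel:
  assumes g: "inj_on g D" "g ` D \<subseteq> {..<n'}" and D: "D \<subseteq> {..<m'}"
  obtains y where "cvec_norm n' y \<le> cvec_norm m' x" "\<And>j. j \<in> D \<Longrightarrow> y (g j) = x j"
    "\<And>j'. j' \<notin> g ` D \<Longrightarrow> y j' = 0"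
proof
  define y where "y j' = (if j' \<in> g ` D then x (the_inv_into D g j') else 0)" for j'
  show y_g: "y (g j) = x j" if "j \<in> D" for j
    using that g(1) unfolding y_def by (auto simp: the_inv_into_f_f)
  show "y j' = 0" if "j' \<notin> g ` D" for j'
    using that by (simp add: y_def)
  have "(\<Sum>j'<n'. (cmod (y j'))\<^sup>2) = (\<Sum>j'\<in>g ` D. (cmod (y j'))\<^sup>2)"
    by (rule sum.mono_neutral_right) (use g(2) in \<open>auto simp: y_def\<close>)
  also have "\<dots> = (\<Sum>j\<in>D. (cmod (x j))\<^sup>2)"
    using g(1) by (simp add: sum.reindex y_g)
  also have "\<dots> \<le> (\<Sum>j<m'. (cmod (x j))\<^sup>2)"
    using D by (intro sum_mono2) auto
  finally show "cvec_norm n' y \<le> cvec_norm m' x"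
    by (simp add: cvec_norm_def L2_set_def)
qed

lemma cmat_norm_submatrix_le:
  assumes f: "inj_on f {i. i < m \<and> P i}" "\<And>i. i < m \<Longrightarrow> P i \<Longrightarrow> f i < n"
    and g: "inj_on g {j. j < m' \<and> Q j}" "\<And>j. j < m' \<Longrightarrow> Q j \<Longrightarrow> g j < n'"
  shows "cmat_norm m m' (\<lambda>i j. if P i \<and> Q j then A (f i) (g j) else 0) \<le> cmat_norm n n' A"
proof (rule cmat_norm_least)
  fix x assume x: "cvec_norm m' x \<le> 1"
  define D where "D = {j. j < m' \<and> Q j}"
  define E where "E = {i. i < m \<and> P i}"
  have gD: "g ` D \<subseteq> {..<n'}" using g(2) by (auto simp: D_def)
  have "D \<subseteq> {..<m'}" by (auto simp: D_def)
  obtain y where y_norm: "cvec_norm n' y \<le> cvec_norm m' x" and y_g: "\<And>j. j \<in> D \<Longrightarrow> y (g j) = x j"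
    and y_0: "\<And>j'. j' \<notin> g ` D \<Longrightarrow> y j' = 0"
    by (rule cvec_relabel[where x = x, OF g(1)[folded D_def] gD \<open>D \<subseteq> {..<m'}\<close>]) blast
  have y1: "cvec_norm n' y \<le> 1" using x y_norm by simp
  have apply_eq: "cmat_apply m' (\<lambda>i j. if P i \<and> Q j then A (f i) (g j) else 0) x i
      = (if P i then cmat_apply n' A y (f i) else 0)" for i
  proof (cases "P i")
    case True
    have "(\<Sum>j<m'. (if Q j then A (f i) (g j) else 0) * x j) = (\<Sum>j\<in>D. A (f i) (g j) * y (g j))"
      by (intro sum.mono_neutral_cong_right) (auto simp: D_def y_g)
    also have "\<dots> = (\<Sum>j'\<in>g ` D. A (f i) j' * y j')"
      using g(1) by (simp add: sum.reindex D_def)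
    also have "\<dots> = (\<Sum>j'<n'. A (f i) j' * y j')"
      by (rule sum.mono_neutral_left) (use gD y_0 in auto)
    finally show ?thesis using True by (simp add: cmat_apply_def)
  qed (simp add: cmat_apply_def)
  have "(\<Sum>i<m. (cmod (cmat_apply m' (\<lambda>i j. if P i \<and> Q j then A (f i) (g j) else 0) x i))\<^sup>2)
      = (\<Sum>i\<in>E. (cmod (cmat_apply n' A y (f i)))\<^sup>2)"
    unfolding apply_eq by (intro sum.mono_neutral_cong_right) (auto simp: E_def)
  also have "\<dots> = (\<Sum>i\<in>f ` E. (cmod (cmat_apply n' A y i))\<^sup>2)"
    using f(1) by (simp add: sum.reindex E_def)
  also have "\<dots> \<le> (\<Sum>i<n. (cmod (cmat_apply n' A y i))\<^sup>2)"
    by (rule sum_mono2) (use f(2) in \<open>auto simp: E_def\<close>)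
  finally have "cvec_norm m (cmat_apply m' (\<lambda>i j. if P i \<and> Q j then A (f i) (g j) else 0) x)
      \<le> cvec_norm n (cmat_apply n' A y)"
    by (simp add: cvec_norm_def L2_set_def)
  also have "\<dots> \<le> cmat_norm n n' A"
    using y1 by (rule cmat_norm_upper)
  finally show "cvec_norm m (cmat_apply m' (\<lambda>i j. if P i \<and> Q j then A (f i) (g j) else 0) x)
      \<le> cmat_norm n n' A" .
qed

section \<open>The norm of M_k(T_N)\<close>

lemma block_index_less:
  fixes i l k N p :: nat
  assumes "i < l * k" "p < N"
  shows "(i div k) * N + p < l * N"
proof -
  have "i div k + 1 \<le> l" using less_mult_imp_div_less[OF assms(1)] by simp
  then have "(i div k + 1) * N \<le> l * N" by (rule mult_right_mono) simp
  then show ?thesis using assms(2) by (simp add: algebra_simps)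
qed

lemma sum_sum_delta:
  fixes G :: "nat \<Rightarrow> nat \<Rightarrow> 'a::comm_monoid_add"
  assumes "i < m" "j < n"
  shows "(\<Sum>r<m. \<Sum>s<n. if i = r then if j = s then G r s else 0 else 0) = G i j"
proof -
  have "(\<Sum>s<n. if i = r then if j = s then G r s else 0 else 0) = (if i = r then G r j else 0)" for r
    using assms by (cases "i = r") (simp_all add: sum.delta')
  then show ?thesis using assms by (simp add: sum.delta')
qed

lemma ampl_eq_sum_blocks:
  assumes "0 < k"
  shows "ampl N k \<sigma> a i j = (\<Sum>r<k. \<Sum>s<k. \<Sum>p<N. \<Sum>q<N. \<sigma> r s p q *
      (if i mod k = r \<and> j mod k = s then a ((i div k) * N + p) ((j div k) * N + q) else 0))"
proof -
  define F where "F r s = (\<Sum>p<N. \<Sum>q<N. \<sigma> r s p q * a ((i div k) * N + p) ((j div k) * N + q))"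
    for r s
  have "(\<Sum>p<N. \<Sum>q<N. \<sigma> r s p q *
      (if i mod k = r \<and> j mod k = s then a ((i div k) * N + p) ((j div k) * N + q) else 0))
    = (if i mod k = r then if j mod k = s then F r s else 0 else 0)" for r s
    by (simp add: F_def)
  then show ?thesis
    using assms by (simp add: sum_sum_delta ampl_def F_def)
qed

lemma cmat_norm_block_entries_le:
  assumes "0 < k" "p < N" "q < N"
  shows "cmat_norm (l * k) (l * k) (\<lambda>i j. if i mod k = r \<and> j mod k = s
            then a ((i div k) * N + p) ((j div k) * N + q) else 0) \<le> cmat_norm (l * N) (l * N) a"
proof -
  have inj: "inj_on (\<lambda>i. (i div k) * N + p') {i. i < l * k \<and> i mod k = r'}" if "p' < N" for p' r'
  proof (rule inj_onI)
    fix x y assume "x \<in> {i. i < l * k \<and> i mod k = r'}" "y \<in> {i. i < l * k \<and> i mod k = r'}"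
      and "x div k * N + p' = y div k * N + p'"
    then have "x div k = y div k" "x mod k = y mod k" using that by auto
    then show "x = y" by (metis div_mult_mod_eq)
  qed
  show ?thesis
    by (rule cmat_norm_submatrix_le) (use assms inj block_index_less in auto)
qed

definition coeff_abs_sum :: "nat \<Rightarrow> nat \<Rightarrow> (nat \<Rightarrow> nat \<Rightarrow> nat \<Rightarrow> nat \<Rightarrow> complex) \<Rightarrow> real" where
  "coeff_abs_sum N k \<sigma> = (\<Sum>r<k. \<Sum>s<k. \<Sum>p<N. \<Sum>q<N. cmod (\<sigma> r s p q))"

lemma cmat_norm_ampl_le:
  "cmat_norm (l * k) (l * k) (ampl N k \<sigma> a) \<le> coeff_abs_sum N k \<sigma> * cmat_norm (l * N) (l * N) a"
proof (cases "k = 0")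
  case True
  then show ?thesis
    by (simp add: coeff_abs_sum_def) (rule cmat_norm_least, simp add: cvec_norm_def)
next
  case False
  define R where "R r s p q = (\<lambda>i j. if i mod k = r \<and> j mod k = s
            then a ((i div k) * N + p) ((j div k) * N + q) else 0)" for r s p q
  let ?c = "cmat_norm (l * k) (l * k)"
  have "?c (ampl N k \<sigma> a) = ?c (\<lambda>i j. \<Sum>r<k. \<Sum>s<k. \<Sum>p<N. \<Sum>q<N. \<sigma> r s p q * R r s p q i j)"
    using False by (intro arg_cong[where f = ?c]) (simp add: fun_eq_iff ampl_eq_sum_blocks R_def)
  also have "\<dots> \<le> (\<Sum>r<k. \<Sum>s<k. \<Sum>p<N. \<Sum>q<N. ?c (\<lambda>i j. \<sigma> r s p q * R r s p q i j))"
    by (intro order_trans[OF cmat_norm_sum_le] sum_mono) simp_all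
  also have "\<dots> \<le> (\<Sum>r<k. \<Sum>s<k. \<Sum>p<N. \<Sum>q<N. cmod (\<sigma> r s p q) * cmat_norm (l * N) (l * N) a)"
    using False unfolding R_def
    by (intro sum_mono order_trans[OF cmat_norm_scale_le] mult_left_mono cmat_norm_block_entries_le)
      auto
  also have "\<dots> = coeff_abs_sum N k \<sigma> * cmat_norm (l * N) (l * N) a"
    by (simp add: coeff_abs_sum_def sum_distrib_right)
  finally show ?thesis .
qed

text \<open>The crude bound by coeff_abs_sum only serves to show that the supremum defining
  the T-norm is finite.\<close>

lemma tnorm_bdd_above:
  "bdd_above {cmat_norm (l * k) (l * k) (ampl N k \<sigma> a) | l a.
      1 \<le> l \<and> cmat_norm (l * N) (l * N) a \<le> 1}"
proof (rule bdd_aboveI, clarify)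
  fix l a assume "cmat_norm (l * N) (l * N) a \<le> 1"
  then have "coeff_abs_sum N k \<sigma> * cmat_norm (l * N) (l * N) a \<le> coeff_abs_sum N k \<sigma>"
    by (simp add: coeff_abs_sum_def mult_left_le sum_nonneg)
  then show "cmat_norm (l * k) (l * k) (ampl N k \<sigma> a) \<le> coeff_abs_sum N k \<sigma>"
    by (rule order_trans[OF cmat_norm_ampl_le])
qed

lemma tnorm_upper:
  "1 \<le> l \<Longrightarrow> cmat_norm (l * N) (l * N) a \<le> 1 \<Longrightarrow>
    cmat_norm (l * k) (l * k) (ampl N k \<sigma> a) \<le> tnorm N k \<sigma>"
  unfolding tnorm_def by (rule cSup_upper[OF _ tnorm_bdd_above]) blast

lemma tnorm_least:
  assumes "\<And>l a. 1 \<le> l \<Longrightarrow> cmat_norm (l * N) (l * N) a \<le> 1 \<Longrightarrow>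
    cmat_norm (l * k) (l * k) (ampl N k \<sigma> a) \<le> c"
  shows "tnorm N k \<sigma> \<le> c"
  unfolding tnorm_def
proof (rule cSup_least)
  have "cmat_norm (1 * N) (1 * N) (\<lambda>i j. 0) \<le> 1"
    using cmat_norm_zero_le[of "1 * N" "1 * N"] by simp
  then show "{cmat_norm (l * k) (l * k) (ampl N k \<sigma> a) | l a.
      1 \<le> l \<and> cmat_norm (l * N) (l * N) a \<le> 1} \<noteq> {}" by blast
qed (use assms in blast)

lemma tnorm_nonneg: "0 \<le> tnorm N k \<sigma>"
proof -
  have "cmat_norm (1 * N) (1 * N) (\<lambda>i j. 0) \<le> 1"
    using cmat_norm_zero_le[of "1 * N" "1 * N"] by simp
  then show ?thesis
    by (rule order_trans[OF cmat_norm_nonneg tnorm_upper[rotated]]) simp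
qed

lemma tnorm_add_le:
  "tnorm N k (\<lambda>r s p q. \<sigma> r s p q + \<tau> r s p q) \<le> tnorm N k \<sigma> + tnorm N k \<tau>"
proof (rule tnorm_least)
  fix l a assume "1 \<le> l" "cmat_norm (l * N) (l * N) a \<le> 1"
  then show "cmat_norm (l * k) (l * k) (ampl N k (\<lambda>r s p q. \<sigma> r s p q + \<tau> r s p q) a)
      \<le> tnorm N k \<sigma> + tnorm N k \<tau>"
    using cmat_norm_add_le[of "l * k" "l * k" "ampl N k \<sigma> a" "ampl N k \<tau> a"]
      tnorm_upper[of l N a k \<sigma>] tnorm_upper[of l N a k \<tau>]
    by (simp add: ampl_def distrib_right sum.distrib)
qed

lemma tnorm_scale_le: "tnorm N k (\<lambda>r s p q. c * \<sigma> r s p q) \<le> cmod c * tnorm N k \<sigma>"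
proof (rule tnorm_least)
  fix l a assume "1 \<le> l" "cmat_norm (l * N) (l * N) a \<le> 1"
  then show "cmat_norm (l * k) (l * k) (ampl N k (\<lambda>r s p q. c * \<sigma> r s p q) a)
      \<le> cmod c * tnorm N k \<sigma>"
    using cmat_norm_scale_le[of "l * k" "l * k" c "ampl N k \<sigma> a"] tnorm_upper[of l N a k \<sigma>]
    by (simp add: ampl_def sum_distrib_left mult.assoc mult_left_mono order_trans)
qed

lemma tnorm_zero [simp]: "tnorm N k (\<lambda>r s p q. 0) = 0"
proof -
  have "tnorm N k (\<lambda>r s p q. 0) \<le> 0"
    by (rule tnorm_least) (simp add: ampl_def cmat_norm_zero_le)
  then show ?thesis using tnorm_nonneg by (rule order_antisym)
qed

lemma tnorm_sum_le:
  assumes "finite S"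
  shows "tnorm N k (\<lambda>r s p q. \<Sum>b\<in>S. \<sigma> b r s p q) \<le> (\<Sum>b\<in>S. tnorm N k (\<sigma> b))"
  using assms
proof (induction S rule: finite_induct)
  case empty
  then show ?case by simp
next
  case (insert b S)
  then show ?case
    using tnorm_add_le[of N k "\<sigma> b" "\<lambda>r s p q. \<Sum>b\<in>S. \<sigma> b r s p q"] by simp
qed

lemma tnorm_identity_le:
  assumes "0 < n"
  shows "tnorm n n (\<lambda>r s p q. if p = r \<and> q = s then 1 else 0) \<le> 1"
proof (rule tnorm_least)
  fix l a assume "cmat_norm (l * n) (l * n) a \<le> 1"
  moreover have "ampl n n (\<lambda>r s p q. if p = r \<and> q = s then 1 else 0) a = a"
  proof (intro ext)
    fix i j
    have "ampl n n (\<lambda>r s p q. if p = r \<and> q = s then 1 else 0) a i j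
        = (\<Sum>p<n. \<Sum>q<n. if i mod n = p then if j mod n = q then
           a (i div n * n + p) (j div n * n + q) else 0 else 0)"
      unfolding ampl_def by (intro sum.cong refl) auto
    also have "\<dots> = a (i div n * n + i mod n) (j div n * n + j mod n)"
      using assms by (intro sum_sum_delta) auto
    finally show "ampl n n (\<lambda>r s p q. if p = r \<and> q = s then 1 else 0) a i j = a i j" by simp
  qed
  ultimately show "cmat_norm (l * n) (l * n) (ampl n n (\<lambda>r s p q. if p = r \<and> q = s then 1 else 0) a) \<le> 1"
    by simp
qed

definition shift_block :: "nat \<Rightarrow> nat \<Rightarrow> (nat \<Rightarrow> nat \<Rightarrow> 'a::zero) \<Rightarrow> nat \<Rightarrow> nat \<Rightarrow> 'a" where
  "shift_block off N x = (\<lambda>i j. if off \<le> i \<and> i < off + N \<and> off \<le> j \<and> j < off + N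
      then x (i - off) (j - off) else 0)"

lemma sum_shifted_window:
  fixes F :: "nat \<Rightarrow> 'a::comm_monoid_add"
  assumes "off + N \<le> N'"
  shows "(\<Sum>p<N'. if off \<le> p \<and> p < off + N then F (p - off) else 0) = (\<Sum>p<N. F p)"
proof -
  have "(\<Sum>p<N'. if off \<le> p \<and> p < off + N then F (p - off) else 0) = (\<Sum>p\<in>{off..<off + N}. F (p - off))"
    using assms by (intro sum.mono_neutral_cong_right) auto
  also have "\<dots> = (\<Sum>p<N. F p)"
    using sum.shift_bounds_nat_ivl[of "\<lambda>p. F (p - off)" 0 off N]
    by (simp add: lessThan_atLeast0 add.commute)
  finally show ?thesis .
qed

text \<open>The relabelling places the N x N blocks of an lN x lN matrix at offset off inside
  N' x N' blocks.\<close>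

lemma ampl_shift_block:
  assumes "off + N \<le> N'"
  shows "ampl N' k (\<lambda>r s. shift_block off N (\<sigma> r s)) a
    = ampl N k \<sigma> (\<lambda>I J. a (I div N * N' + (off + I mod N)) (J div N * N' + (off + J mod N)))"
proof (intro ext)
  fix i j
  define H where "H p q = \<sigma> (i mod k) (j mod k) p q *
      a (i div k * N' + (off + p)) (j div k * N' + (off + q))" for p q
  have "ampl N' k (\<lambda>r s. shift_block off N (\<sigma> r s)) a i j = (\<Sum>p<N'. if off \<le> p \<and> p < off + N
      then (\<Sum>q<N'. if off \<le> q \<and> q < off + N then H (p - off) (q - off) else 0) else 0)"
    unfolding ampl_def shift_block_def H_def by (intro sum.cong refl) (auto intro!: sum.cong)
  also have "\<dots> = (\<Sum>p<N'. if off \<le> p \<and> p < off + N then (\<Sum>q<N. H (p - off) q) else 0)"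
    by (simp only: sum_shifted_window[OF assms])
  also have "\<dots> = (\<Sum>p<N. \<Sum>q<N. H p q)"
    by (rule sum_shifted_window[OF assms])
  finally show "ampl N' k (\<lambda>r s. shift_block off N (\<sigma> r s)) a i j
      = ampl N k \<sigma> (\<lambda>I J. a (I div N * N' + (off + I mod N)) (J div N * N' + (off + J mod N))) i j"
    unfolding ampl_def H_def by simp
qed

lemma tnorm_shift_block_le:
  assumes "off + N \<le> N'"
  shows "tnorm N' k (\<lambda>r s. shift_block off N (\<sigma> r s)) \<le> tnorm N k \<sigma>"
proof (rule tnorm_least)
  fix l a assume l: "1 \<le> l" and a: "cmat_norm (l * N') (l * N') a \<le> 1"
  define f where "f I = I div N * N' + (off + I mod N)" for I
  have window: "off + I mod N < N'" if "0 < N" for I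
    using assms mod_less_divisor[OF that, of I] by linarith
  have f_less: "f I < l * N'" if "I < l * N" for I
  proof -
    have "0 < N" using that by (cases N) auto
    then show ?thesis unfolding f_def by (rule block_index_less[OF that window])
  qed
  have "inj_on f {I. I < l * N \<and> True}"
  proof (rule inj_onI)
    fix x y assume "x \<in> {I. I < l * N \<and> True}" and f: "f x = f y"
    then have N: "0 < N" by (cases N) auto
    have "f x div N' = x div N" "f y div N' = y div N" "f x mod N' = off + x mod N" "f y mod N' = off + y mod N"
      using window[OF N, of x] window[OF N, of y] by (simp_all add: f_def)
    with f have "x div N = y div N" "x mod N = y mod N" by simp_all
    then show "x = y" by (metis div_mult_mod_eq)
  qed
  then have "cmat_norm (l * N) (l * N) (\<lambda>I J. if True \<and> True then a (f I) (f J) else 0)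
      \<le> cmat_norm (l * N') (l * N') a"
    by (intro cmat_norm_submatrix_le) (auto intro: f_less)
  with a have "cmat_norm (l * N) (l * N) (\<lambda>I J. a (f I) (f J)) \<le> 1" by simp
  from tnorm_upper[OF l this] show
    "cmat_norm (l * k) (l * k) (ampl N' k (\<lambda>r s. shift_block off N (\<sigma> r s)) a) \<le> tnorm N k \<sigma>"
    unfolding ampl_shift_block[OF assms] f_def .
qed

lemma mat_sp_diff:
  fixes x y :: "nat \<Rightarrow> nat \<Rightarrow> 'a::ab_group_add"
  shows "x \<in> mat_sp n \<Longrightarrow> y \<in> mat_sp n \<Longrightarrow> (\<lambda>i j. x i j - y i j) \<in> mat_sp n"
  by (simp add: mat_sp_def)

lemma mat_sp_zero: "(\<lambda>i j. 0) \<in> mat_sp n"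
  by (simp add: mat_sp_def)

locale opspace =
  fixes sc :: "complex \<Rightarrow> 'v::ab_group_add \<Rightarrow> 'v"
    and mn :: "nat \<Rightarrow> (nat \<Rightarrow> nat \<Rightarrow> 'v) \<Rightarrow> real"
  assumes operator_space: "operator_space sc mn"

sublocale opspace \<subseteq> module sc
  using operator_space unfolding operator_space_def module_iff_vector_space by simp

context opspace
begin

lemma mn_nonneg: "x \<in> mat_sp n \<Longrightarrow> 0 \<le> mn n x"
  using operator_space unfolding operator_space_def by blast

lemma mn_eq_0D: "x \<in> mat_sp n \<Longrightarrow> mn n x = 0 \<Longrightarrow> x = (\<lambda>i j. 0)"
  using operator_space unfolding operator_space_def by blast

lemma mn_add_le: "x \<in> mat_sp n \<Longrightarrow> y \<in> mat_sp n \<Longrightarrow> mn n (\<lambda>i j. x i j + y i j) \<le> mn n x + mn n y"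
  using operator_space unfolding operator_space_def by blast

lemma mn_scale: "x \<in> mat_sp n \<Longrightarrow> mn n (\<lambda>i j. sc c (x i j)) = cmod c * mn n x"
  using operator_space unfolding operator_space_def by blast

lemma mn_mat_mult3_le:
  "x \<in> mat_sp n \<Longrightarrow> mn m (mat_mult3 sc m n \<alpha> x \<beta>) \<le> cmat_norm m n \<alpha> * mn n x * cmat_norm n m \<beta>"
  using operator_space unfolding operator_space_def by blast

lemma mn_zero [simp]: "mn n (\<lambda>i j. 0) = 0"
  using mn_scale[OF mat_sp_zero, of n 0] by simp

lemma mn_minus: "x \<in> mat_sp n \<Longrightarrow> mn n (\<lambda>i j. - x i j) = mn n x"
  using mn_scale[of x n "-1"] by simp

lemma mn_diff_commute: "x \<in> mat_sp n \<Longrightarrow> y \<in> mat_sp n \<Longrightarrow> mn n (\<lambda>i j. x i j - y i j) = mn n (\<lambda>i j. y i j - x i j)"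
  using mn_minus[OF mat_sp_diff[of y n x]] by simp

lemma mn_diff_le: "x \<in> mat_sp n \<Longrightarrow> y \<in> mat_sp n \<Longrightarrow> mn n (\<lambda>i j. x i j - y i j) \<le> mn n x + mn n y"
  using mn_add_le[of x n "\<lambda>i j. - y i j"] mn_minus[of y n] by (simp add: mat_sp_def)

lemma mn_sum_le:
  assumes "finite S" "\<And>b. b \<in> S \<Longrightarrow> x b \<in> mat_sp n"
  shows "mn n (\<lambda>i j. \<Sum>b\<in>S. x b i j) \<le> (\<Sum>b\<in>S. mn n (x b))"
  using assms
proof (induction S rule: finite_induct)
  case (insert b S)
  have "(\<lambda>i j. \<Sum>b\<in>S. x b i j) \<in> mat_sp n"
    using insert.prems by (auto simp: mat_sp_def intro!: sum.neutral)
  then show ?case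
    using insert mn_add_le[of "x b" n "\<lambda>i j. \<Sum>b\<in>S. x b i j"] by simp
qed simp

text \<open>Ruan's second axiom with the partial permutation matrices realising the relabelling.\<close>

lemma mn_submatrix_le:
  assumes y: "y \<in> mat_sp n"
    and h: "inj_on h {i. i < m \<and> P i}" "\<And>i. i < m \<Longrightarrow> P i \<Longrightarrow> h i < n"
    and g: "inj_on g {j. j < m \<and> Q j}" "\<And>j. j < m \<Longrightarrow> Q j \<Longrightarrow> g j < n"
  shows "mn m (\<lambda>i j. if i < m \<and> j < m \<and> P i \<and> Q j then y (h i) (g j) else 0) \<le> mn n y"
proof -
  define I :: "nat \<Rightarrow> nat \<Rightarrow> complex" where "I = (\<lambda>i j. if i = j then 1 else 0)"
  define \<alpha> where "\<alpha> = (\<lambda>i p. if P i \<and> True then I (h i) (id p) else 0)"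
  define \<beta> where "\<beta> = (\<lambda>q j. if True \<and> Q j then I (id q) (g j) else 0)"
  have "cmat_norm m n \<alpha> \<le> cmat_norm n n I"
    unfolding \<alpha>_def by (rule cmat_norm_submatrix_le) (use h in auto)
  then have \<alpha>1: "cmat_norm m n \<alpha> \<le> 1"
    using cmat_norm_identity_le unfolding I_def by (rule order_trans)
  have "cmat_norm n m \<beta> \<le> cmat_norm n n I"
    unfolding \<beta>_def by (rule cmat_norm_submatrix_le) (use g in auto)
  then have \<beta>1: "cmat_norm n m \<beta> \<le> 1"
    using cmat_norm_identity_le unfolding I_def by (rule order_trans)
  have "mat_mult3 sc m n \<alpha> y \<beta> = (\<lambda>i j. if i < m \<and> j < m \<and> P i \<and> Q j then y (h i) (g j) else 0)"
  proof (intro ext)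
    fix i j
    show "mat_mult3 sc m n \<alpha> y \<beta> i j = (if i < m \<and> j < m \<and> P i \<and> Q j then y (h i) (g j) else 0)"
    proof (cases "i < m \<and> j < m \<and> P i \<and> Q j")
      case True
      then have "(\<Sum>p<n. \<Sum>q<n. sc (\<alpha> i p * \<beta> q j) (y p q))
          = (\<Sum>p<n. \<Sum>q<n. if h i = p then if g j = q then y p q else 0 else 0)"
        by (intro sum.cong refl) (auto simp: \<alpha>_def \<beta>_def I_def)
      also have "\<dots> = y (h i) (g j)" by (rule sum_sum_delta) (use True h(2) g(2) in auto)
      finally show ?thesis using True by (simp add: mat_mult3_def)
    qed (auto simp: mat_mult3_def \<alpha>_def \<beta>_def intro!: sum.neutral)
  qed
  moreover have "mn m (mat_mult3 sc m n \<alpha> y \<beta>) \<le> cmat_norm m n \<alpha> * mn n y * cmat_norm n m \<beta>"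
    by (rule mn_mat_mult3_le[OF y])
  moreover have "\<dots> \<le> 1 * mn n y * 1"
    using \<alpha>1 \<beta>1 mn_nonneg[OF y] cmat_norm_nonneg by (intro mult_mono) auto
  ultimately show ?thesis by simp
qed

end

section \<open>Quotients of T_n\<close>

definition matrix_unit :: "nat \<Rightarrow> nat \<Rightarrow> nat \<Rightarrow> nat \<Rightarrow> complex" where
  "matrix_unit p q = (\<lambda>p' q'. if p' = p \<and> q' = q then 1 else 0)"

lemma matrix_unit_Tn: "p < n \<Longrightarrow> q < n \<Longrightarrow> matrix_unit p q \<in> Tn n"
  by (auto simp: matrix_unit_def Tn_def)

lemma Tn_eq_sum_matrix_units:
  assumes "t \<in> Tn n"
  shows "t p' q' = (\<Sum>p<n. \<Sum>q<n. t p q * matrix_unit p q p' q')"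
proof (cases "p' < n \<and> q' < n")
  case True
  have "(\<Sum>p<n. \<Sum>q<n. t p q * matrix_unit p q p' q')
      = (\<Sum>p<n. \<Sum>q<n. if p' = p then if q' = q then t p q else 0 else 0)"
    by (intro sum.cong refl) (auto simp: matrix_unit_def)
  also have "\<dots> = t p' q'" using True by (intro sum_sum_delta) auto
  finally show ?thesis by simp
next
  case False
  then show ?thesis using assms by (auto simp: Tn_def matrix_unit_def intro!: sum.neutral)
qed

lemma csubspace_Tn_sum:
  assumes "csubspace_Tn n W" "finite S" "\<And>b. b \<in> S \<Longrightarrow> t b \<in> W"
  shows "(\<lambda>p q. \<Sum>b\<in>S. t b p q) \<in> W"
  using assms(2,3)
proof (induction S rule: finite_induct)
  case empty
  then show ?case using assms(1) by (simp add: csubspace_Tn_def)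
next
  case (insert b S)
  from assms(1) have "\<forall>s\<in>W. \<forall>t\<in>W. (\<lambda>p q. s p q + t p q) \<in> W"
    by (simp add: csubspace_Tn_def)
  with insert have "(\<lambda>p q. t b p q + (\<Sum>b\<in>S. t b p q)) \<in> W" by simp
  then show ?case using insert by simp
qed

lemma csubspace_Tn_diff:
  assumes "csubspace_Tn n W" "s \<in> W" "t \<in> W"
  shows "(\<lambda>p q. s p q - t p q) \<in> W"
proof -
  from assms(1) have add: "\<forall>s\<in>W. \<forall>t\<in>W. (\<lambda>p q. s p q + t p q) \<in> W"
    and scale: "\<forall>c. \<forall>t\<in>W. (\<lambda>p q. c * t p q) \<in> W"
    by (simp_all add: csubspace_Tn_def)
  from add[rule_format, OF assms(2) scale[rule_format, OF assms(3), of "-1"]] show ?thesis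
    by simp
qed

lemma qnorm_le_tnorm:
  assumes "\<forall>r<m. \<forall>s<m. w r s \<in> W"
  shows "qnorm n W m \<tau> \<le> tnorm n m (\<lambda>r s p q. \<tau> r s p q - w r s p q)"
  unfolding qnorm_def
proof (rule cInf_lower)
  show "tnorm n m (\<lambda>r s p q. \<tau> r s p q - w r s p q)
      \<in> {tnorm n m (\<lambda>r s p q. \<tau> r s p q - w r s p q) | w. \<forall>r<m. \<forall>s<m. w r s \<in> W}"
    unfolding mem_Collect_eq by (intro exI[of _ w] conjI refl assms)
  show "bdd_below {tnorm n m (\<lambda>r s p q. \<tau> r s p q - w r s p q) | w. \<forall>r<m. \<forall>s<m. w r s \<in> W}"
    by (rule bdd_belowI[of _ 0]) (auto simp: tnorm_nonneg)
qed

lemma qnorm_nonempty: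
  assumes "csubspace_Tn n W"
  shows "{tnorm n m (\<lambda>r s p q. \<tau> r s p q - w r s p q) | w. \<forall>r<m. \<forall>s<m. w r s \<in> W} \<noteq> {}"
proof -
  have "\<forall>r<m. \<forall>s<m. (\<lambda>r s p q. 0) r s \<in> W" using assms by (simp add: csubspace_Tn_def)
  then have "tnorm n m (\<lambda>r s p q. \<tau> r s p q - (\<lambda>r s p q. 0) r s p q)
      \<in> {tnorm n m (\<lambda>r s p q. \<tau> r s p q - w r s p q) | w. \<forall>r<m. \<forall>s<m. w r s \<in> W}"
    unfolding mem_Collect_eq by (intro exI[of _ "\<lambda>r s p q. 0"] conjI refl)
  then show ?thesis by auto
qed

lemma qnorm_nonneg: "csubspace_Tn n W \<Longrightarrow> 0 \<le> qnorm n W m \<tau>"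
  unfolding qnorm_def by (rule cInf_greatest[OF qnorm_nonempty]) (auto simp: tnorm_nonneg)

lemma qnorm_lessE:
  assumes "csubspace_Tn n W" "qnorm n W m \<tau> < c"
  obtains w where "\<forall>r<m. \<forall>s<m. w r s \<in> W" "tnorm n m (\<lambda>r s p q. \<tau> r s p q - w r s p q) < c"
proof -
  obtain v where "v \<in> {tnorm n m (\<lambda>r s p q. \<tau> r s p q - w r s p q) | w. \<forall>r<m. \<forall>s<m. w r s \<in> W}"
    and "v < c"
    using cInf_lessD[OF qnorm_nonempty[OF assms(1)] assms(2)[unfolded qnorm_def]] by (rule bexE)
  then show thesis using that unfolding mem_Collect_eq by (elim exE conjE) simp
qed

lemma (in opspace) additive_map_sum:
  assumes G: "subspace G"
    and \<phi>_add: "\<forall>x\<in>G. \<forall>y\<in>G. \<phi> (x + y) = (\<lambda>p q. \<phi> x p q + \<phi> y p q)"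
    and \<phi>_scale: "\<forall>a. \<forall>x\<in>G. \<phi> (sc a x) = (\<lambda>p q. a * \<phi> x p q)"
    and "finite S" "\<forall>b\<in>S. x b \<in> G"
  shows "\<phi> (\<Sum>b\<in>S. x b) = (\<lambda>p q. \<Sum>b\<in>S. \<phi> (x b) p q)"
  using assms(4,5)
proof (induction S rule: finite_induct)
  case empty
  show ?case using \<phi>_scale subspace_0[OF G] by (metis mult_zero_left scale_zero_left sum.empty)
next
  case (insert b S)
  have "sum x S \<in> G" using insert.prems by (intro subspace_sum[OF G]) auto
  then show ?case using insert \<phi>_add by simp
qed

text \<open>The inverse of the linear bijection from G onto T_n/W induced by phi is slicing against
  preimages e of the matrix units.\<close>

lemma (in opspace) Tn_quotient_inverse:
  assumes G: "subspace G" and W: "csubspace_Tn n W"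
    and \<phi>_add: "\<forall>x\<in>G. \<forall>y\<in>G. \<phi> (x + y) = (\<lambda>p q. \<phi> x p q + \<phi> y p q)"
    and \<phi>_scale: "\<forall>a. \<forall>x\<in>G. \<phi> (sc a x) = (\<lambda>p q. a * \<phi> x p q)"
    and \<phi>_inj: "\<forall>x\<in>G. \<phi> x \<in> W \<longrightarrow> x = 0"
    and eG: "\<forall>p q. e p q \<in> G"
    and eW: "\<And>p q. p < n \<Longrightarrow> q < n \<Longrightarrow> (\<lambda>p' q'. matrix_unit p q p' q' - \<phi> (e p q) p' q') \<in> W"
    and t: "t \<in> Tn n" and x: "x \<in> G" and tx: "(\<lambda>p q. t p q - \<phi> x p q) \<in> W"
  shows "(\<Sum>p<n. \<Sum>q<n. sc (t p q) (e p q)) = x"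
proof -
  define x' where "x' = (\<Sum>p<n. \<Sum>q<n. sc (t p q) (e p q))"
  have x'G: "x' \<in> G" unfolding x'_def using G eG by (intro subspace_sum subspace_scale) auto
  have row: "\<phi> (\<Sum>q<n. sc (t p q) (e p q)) = (\<lambda>p' q'. \<Sum>q<n. t p q * \<phi> (e p q) p' q')" for p
  proof -
    have "\<phi> (\<Sum>q<n. sc (t p q) (e p q)) = (\<lambda>p' q'. \<Sum>q<n. \<phi> (sc (t p q) (e p q)) p' q')"
      using G eG by (intro additive_map_sum[OF G \<phi>_add \<phi>_scale]) (auto intro: subspace_scale)
    then show ?thesis using \<phi>_scale eG by simp
  qed
  have "\<phi> x' = (\<lambda>p' q'. \<Sum>p<n. \<phi> (\<Sum>q<n. sc (t p q) (e p q)) p' q')"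
    unfolding x'_def using G eG
    by (intro additive_map_sum[OF G \<phi>_add \<phi>_scale]) (auto intro!: subspace_sum subspace_scale)
  then have "\<phi> x' = (\<lambda>p' q'. \<Sum>p<n. \<Sum>q<n. t p q * \<phi> (e p q) p' q')"
    by (simp only: row)
  then have "(\<lambda>p' q'. t p' q' - \<phi> x' p' q')
      = (\<lambda>p' q'. \<Sum>p<n. \<Sum>q<n. t p q * (matrix_unit p q p' q' - \<phi> (e p q) p' q'))"
    by (simp add: right_diff_distrib sum_subtractf Tn_eq_sum_matrix_units[OF t, symmetric])
  also have "\<dots> \<in> W"
    using W eW by (intro csubspace_Tn_sum) (auto simp: csubspace_Tn_def)
  finally have "(\<lambda>p q. (t p q - \<phi> x p q) - (t p q - \<phi> x' p q)) \<in> W"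
    by (rule csubspace_Tn_diff[OF W tx])
  moreover have "\<phi> ((x' - x) + x) = (\<lambda>p q. \<phi> (x' - x) p q + \<phi> x p q)"
    using \<phi>_add x subspace_diff[OF G x'G x] by blast
  then have "\<phi> (x' - x) = (\<lambda>p q. (t p q - \<phi> x p q) - (t p q - \<phi> x' p q))"
    by (simp add: fun_eq_iff)
  ultimately have "\<phi> (x' - x) \<in> W" by simp
  then have "x' - x = 0" using \<phi>_inj subspace_diff[OF G x'G x] by blast
  then show ?thesis unfolding x'_def by simp
qed

lemma (in opspace) Tn_quotient_basis:
  assumes G: "subspace G" and W: "csubspace_Tn n W"
    and \<phi>_Tn: "\<forall>x\<in>G. \<phi> x \<in> Tn n"
    and \<phi>_add: "\<forall>x\<in>G. \<forall>y\<in>G. \<phi> (x + y) = (\<lambda>p q. \<phi> x p q + \<phi> y p q)"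
    and \<phi>_scale: "\<forall>a. \<forall>x\<in>G. \<phi> (sc a x) = (\<lambda>p q. a * \<phi> x p q)"
    and \<phi>_inj: "\<forall>x\<in>G. \<phi> x \<in> W \<longrightarrow> x = 0"
    and \<phi>_surj: "\<forall>t\<in>Tn n. \<exists>x\<in>G. (\<lambda>p q. t p q - \<phi> x p q) \<in> W"
  obtains e where "e \<in> mat_sp n" "\<forall>p q. e p q \<in> G"
    "\<And>p q. p < n \<Longrightarrow> q < n \<Longrightarrow> (\<lambda>p' q'. matrix_unit p q p' q' - \<phi> (e p q) p' q') \<in> W"
    "\<And>t x. t \<in> Tn n \<Longrightarrow> x \<in> G \<Longrightarrow> (\<lambda>p q. t p q - \<phi> x p q) \<in> W \<Longrightarrow>
       (\<Sum>p<n. \<Sum>q<n. sc (t p q) (e p q)) = x"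
proof -
  have "\<forall>p q. \<exists>x. p < n \<and> q < n \<longrightarrow>
      x \<in> G \<and> (\<lambda>p' q'. matrix_unit p q p' q' - \<phi> x p' q') \<in> W"
    using \<phi>_surj matrix_unit_Tn by blast
  then obtain e0 where e0: "\<forall>p q. p < n \<and> q < n \<longrightarrow>
      e0 p q \<in> G \<and> (\<lambda>p' q'. matrix_unit p q p' q' - \<phi> (e0 p q) p' q') \<in> W"
    by (metis choice)
  define e where "e p q = (if p < n \<and> q < n then e0 p q else 0)" for p q
  have "e \<in> mat_sp n" by (simp add: e_def mat_sp_def)
  moreover have eG: "\<forall>p q. e p q \<in> G" using e0 subspace_0[OF G] by (simp add: e_def)
  moreover have eW: "(\<lambda>p' q'. matrix_unit p q p' q' - \<phi> (e p q) p' q') \<in> W" if "p < n" "q < n" for p q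
    using e0 that by (simp add: e_def)
  ultimately show thesis
    using that Tn_quotient_inverse[OF G W \<phi>_add \<phi>_scale \<phi>_inj eG eW] by blast
qed

context opspace
begin

lemma slice_scale_right:
  "slice sc k N \<sigma> (\<lambda>p q. sc a (x p q)) = slice sc k N (\<lambda>r s p q. \<sigma> r s p q * a) x"
  by (simp add: slice_def fun_eq_iff)

lemma slice_zero_coeffs: "slice sc k N (\<lambda>r s p q. 0) x = (\<lambda>r s. 0)"
  by (simp add: slice_def fun_eq_iff)

lemma slice_sum_coeffs:
  assumes "finite S"
  shows "slice sc k N (\<lambda>r s p q. \<Sum>b\<in>S. \<sigma> b r s p q) x = (\<lambda>r s. \<Sum>b\<in>S. slice sc k N (\<sigma> b) x r s)"
  using assms by (auto simp: slice_def fun_eq_iff scale_sum_left sum.swap[of _ S])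

lemma slice_cong_right:
  assumes "\<And>p q. p < N \<Longrightarrow> q < N \<Longrightarrow> x p q = y p q"
  shows "slice sc k N \<sigma> x = slice sc k N \<sigma> y"
  using assms by (simp add: slice_def fun_eq_iff)

lemma slice_shift_block_coeffs:
  assumes "off + N \<le> N'"
  shows "slice sc k N' (\<lambda>r s. shift_block off N (\<sigma> r s)) x
    = slice sc k N \<sigma> (\<lambda>p q. x (off + p) (off + q))"
proof (intro ext)
  fix r s
  define H where "H p q = sc (\<sigma> r s p q) (x (off + p) (off + q))" for p q
  have "(\<Sum>p<N'. \<Sum>q<N'. sc (shift_block off N (\<sigma> r s) p q) (x p q))
      = (\<Sum>p<N'. if off \<le> p \<and> p < off + N then
          (\<Sum>q<N'. if off \<le> q \<and> q < off + N then H (p - off) (q - off) else 0) else 0)"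
    unfolding shift_block_def H_def by (intro sum.cong refl) (auto intro!: sum.cong)
  also have "\<dots> = (\<Sum>p<N'. if off \<le> p \<and> p < off + N then (\<Sum>q<N. H (p - off) q) else 0)"
    by (simp only: sum_shifted_window[OF assms])
  also have "\<dots> = (\<Sum>p<N. \<Sum>q<N. H p q)"
    by (rule sum_shifted_window[OF assms])
  finally show "slice sc k N' (\<lambda>r s. shift_block off N (\<sigma> r s)) x r s
      = slice sc k N \<sigma> (\<lambda>p q. x (off + p) (off + q)) r s"
    by (simp add: slice_def H_def)
qed

end

section \<open>Liftings through slices\<close>

text \<open>The matrix e in M_n(V) encodes the map from T_n to V sending the matrix units to the entries
  of e; it has cb-norm at most 1, and every matrix over G lifts through it with T-norm at most c,
  up to an arbitrary slack.\<close>

definition slice_lifts :: "(complex \<Rightarrow> 'v \<Rightarrow> 'v::ab_group_add) \<Rightarrow> (nat \<Rightarrow> (nat \<Rightarrow> nat \<Rightarrow> 'v) \<Rightarrow> real) \<Rightarrow>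
    real \<Rightarrow> nat \<Rightarrow> (nat \<Rightarrow> nat \<Rightarrow> 'v) \<Rightarrow> 'v set \<Rightarrow> bool" where
  "slice_lifts sc mn c n e G \<longleftrightarrow> e \<in> mat_sp n \<and> mn n e \<le> 1 \<and>
     (\<forall>k d \<delta>. 1 \<le> k \<longrightarrow> d \<in> mat_sp k \<longrightarrow> (\<forall>i j. d i j \<in> G) \<longrightarrow> 0 < \<delta> \<longrightarrow>
        (\<exists>\<sigma>. tnorm n k \<sigma> < c * mn k d + \<delta> \<and> slice sc k n \<sigma> e = d))"

context opspace
begin

lemma slice_lifts_trivial:
  assumes "G \<subseteq> {0}"
  shows "slice_lifts sc mn c n (\<lambda>i j. 0) G"
  unfolding slice_lifts_def
proof (intro conjI allI impI exI)
  fix k d and \<delta> :: real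
  assume "d \<in> mat_sp k" "\<forall>i j. d i j \<in> G" "0 < \<delta>"
  moreover from this have "d = (\<lambda>i j. 0)" using assms by (auto simp: fun_eq_iff)
  ultimately show "tnorm n k (\<lambda>r s p q. 0) < c * mn k d + \<delta>"
    and "slice sc k n (\<lambda>r s p q. 0) (\<lambda>i j. 0) = d"
    by (simp_all add: slice_zero_coeffs)
qed (simp_all add: mat_sp_zero)

lemma quotient_basis_norm_le:
  assumes W: "csubspace_Tn n W" and e: "e \<in> mat_sp n" "\<forall>p q. e p q \<in> G"
    and e_units: "\<And>p q. p < n \<Longrightarrow> q < n \<Longrightarrow>
        (\<lambda>p' q'. matrix_unit p q p' q' - \<phi> (e p q) p' q') \<in> W"
    and B: "0 \<le> B"
    and est: "\<forall>m x. 1 \<le> m \<longrightarrow> x \<in> mat_sp m \<longrightarrow> (\<forall>i j. x i j \<in> G) \<longrightarrow>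
           mn m x \<le> B * qnorm n W m (\<lambda>r s. \<phi> (x r s))"
  shows "mn n e \<le> B"
proof (cases "n = 0")
  case True
  with e(1) have "e = (\<lambda>i j. 0)" by (auto simp: mat_sp_def)
  then show ?thesis using B by simp
next
  case False
  define w where "w r s = (\<lambda>p q. \<phi> (e r s) p q - matrix_unit r s p q)" for r s
  have "\<forall>r<n. \<forall>s<n. w r s \<in> W"
  proof (intro allI impI)
    fix r s assume "r < n" "s < n"
    have "(\<lambda>p q. 0) \<in> W" using W by (simp add: csubspace_Tn_def)
    from csubspace_Tn_diff[OF W this e_units[OF \<open>r < n\<close> \<open>s < n\<close>]]
    show "w r s \<in> W" by (simp add: w_def)
  qed
  then have "qnorm n W n (\<lambda>r s. \<phi> (e r s)) \<le> tnorm n n (\<lambda>r s p q. \<phi> (e r s) p q - w r s p q)"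
    by (rule qnorm_le_tnorm)
  also have "(\<lambda>r s p q. \<phi> (e r s) p q - w r s p q) = matrix_unit"
    by (simp add: w_def fun_eq_iff)
  also have "tnorm n n matrix_unit \<le> 1"
    using tnorm_identity_le[of n] False by (simp add: matrix_unit_def[abs_def])
  finally have "B * qnorm n W n (\<lambda>r s. \<phi> (e r s)) \<le> B"
    using B by (simp add: mult_left_le)
  moreover have "mn n e \<le> B * qnorm n W n (\<lambda>r s. \<phi> (e r s))"
    using est e False by simp
  ultimately show ?thesis by linarith
qed

lemma slice_quotient_lift:
  assumes W: "csubspace_Tn n W" and \<phi>_Tn: "\<forall>x\<in>G. \<phi> x \<in> Tn n"
    and e_inverse: "\<And>t x. t \<in> Tn n \<Longrightarrow> x \<in> G \<Longrightarrow> (\<lambda>p q. t p q - \<phi> x p q) \<in> W \<Longrightarrow>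
        (\<Sum>p<n. \<Sum>q<n. sc (t p q) (e p q)) = x"
    and d: "d \<in> mat_sp k" "\<forall>i j. d i j \<in> G" and w: "\<forall>r<k. \<forall>s<k. w r s \<in> W"
  shows "slice sc k n (\<lambda>r s p q. \<phi> (d r s) p q - w r s p q) e = d"
proof (intro ext)
  fix r s
  show "slice sc k n (\<lambda>r s p q. \<phi> (d r s) p q - w r s p q) e r s = d r s"
  proof (cases "r < k \<and> s < k")
    case True
    have "(\<lambda>p q. \<phi> (d r s) p q - w r s p q) \<in> Tn n"
      "(\<lambda>p q. (\<phi> (d r s) p q - w r s p q) - \<phi> (d r s) p q) \<in> W"
      using \<phi>_Tn d(2) w True W csubspace_Tn_diff[OF W, of "\<lambda>p q. 0" "w r s"]
      by (auto simp: Tn_def csubspace_Tn_def subset_iff)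
    with d(2) show ?thesis using True e_inverse by (simp add: slice_def)
  next
    case False
    then show ?thesis using d(1) by (auto simp: slice_def mat_sp_def)
  qed
qed

lemma slice_lifts_of_quotient_basis:
  assumes W: "csubspace_Tn n W" and \<phi>_Tn: "\<forall>x\<in>G. \<phi> x \<in> Tn n"
    and e: "e \<in> mat_sp n" "\<forall>p q. e p q \<in> G"
    and e_units: "\<And>p q. p < n \<Longrightarrow> q < n \<Longrightarrow>
        (\<lambda>p' q'. matrix_unit p q p' q' - \<phi> (e p q) p' q') \<in> W"
    and e_inverse: "\<And>t x. t \<in> Tn n \<Longrightarrow> x \<in> G \<Longrightarrow> (\<lambda>p q. t p q - \<phi> x p q) \<in> W \<Longrightarrow>
        (\<Sum>p<n. \<Sum>q<n. sc (t p q) (e p q)) = x"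
    and AB: "A * B < c" and B: "0 < B"
    and est: "\<forall>m x. 1 \<le> m \<longrightarrow> x \<in> mat_sp m \<longrightarrow> (\<forall>i j. x i j \<in> G) \<longrightarrow>
           qnorm n W m (\<lambda>r s. \<phi> (x r s)) \<le> A * mn m x \<and>
           mn m x \<le> B * qnorm n W m (\<lambda>r s. \<phi> (x r s))"
  shows "slice_lifts sc mn c n (\<lambda>p q. sc (of_real (1 / B)) (e p q)) G"
  unfolding slice_lifts_def
proof (intro conjI allI impI)
  show "(\<lambda>p q. sc (of_real (1 / B)) (e p q)) \<in> mat_sp n"
    using e(1) by (simp add: mat_sp_def)
  have "mn n e \<le> B"
    using quotient_basis_norm_le[OF W e e_units] B est by auto
  then show "mn n (\<lambda>p q. sc (of_real (1 / B)) (e p q)) \<le> 1"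
    using B by (simp add: mn_scale[OF e(1)] norm_divide field_simps)
  fix k d and \<delta> :: real
  assume k: "1 \<le> k" and d: "d \<in> mat_sp k" "\<forall>i j. d i j \<in> G" and \<delta>: "0 < \<delta>"
  have "qnorm n W k (\<lambda>r s. \<phi> (d r s)) \<le> A * mn k d"
    using est k d by blast
  moreover have "0 < \<delta> / B" using \<delta> B by simp
  ultimately have "qnorm n W k (\<lambda>r s. \<phi> (d r s)) < A * mn k d + \<delta> / B" by linarith
  then obtain w where w: "\<forall>r<k. \<forall>s<k. w r s \<in> W"
    and w_norm: "tnorm n k (\<lambda>r s p q. \<phi> (d r s) p q - w r s p q) < A * mn k d + \<delta> / B"
    by (rule qnorm_lessE[OF W])
  define \<tau> where "\<tau> = (\<lambda>r s p q. \<phi> (d r s) p q - w r s p q)"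
  have "tnorm n k (\<lambda>r s p q. of_real B * \<tau> r s p q) \<le> B * tnorm n k \<tau>"
    using tnorm_scale_le[of n k "of_real B" \<tau>] B by simp
  also have "\<dots> < B * (A * mn k d + \<delta> / B)"
    using w_norm B by (simp add: \<tau>_def)
  also have "\<dots> = A * B * mn k d + \<delta>"
    using B by (simp add: field_simps)
  also have "\<dots> \<le> c * mn k d + \<delta>"
    using AB mn_nonneg[OF d(1)] by (simp add: mult_right_mono)
  moreover have "slice sc k n \<tau> e = d"
    unfolding \<tau>_def by (rule slice_quotient_lift[OF W \<phi>_Tn e_inverse d w])
  ultimately show "\<exists>\<sigma>. tnorm n k \<sigma> < c * mn k d + \<delta> \<and>
      slice sc k n \<sigma> (\<lambda>p q. sc (of_real (1 / B)) (e p q)) = d"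
    using B by (intro exI[of _ "\<lambda>r s p q. of_real B * \<tau> r s p q"])
      (simp add: slice_scale_right flip: of_real_mult)
qed

lemma dcb_Tquot_less_imp_slice_lifts:
  assumes G: "subspace G" and W: "csubspace_Tn n W" and dcb: "dcb_Tquot_less sc mn G n W c"
  shows "\<exists>e. slice_lifts sc mn c n e G"
proof -
  from dcb obtain \<phi> A B where
    \<phi>: "\<forall>x\<in>G. \<phi> x \<in> Tn n" "\<forall>x\<in>G. \<forall>y\<in>G. \<phi> (x + y) = (\<lambda>p q. \<phi> x p q + \<phi> y p q)"
      "\<forall>a. \<forall>x\<in>G. \<phi> (sc a x) = (\<lambda>p q. a * \<phi> x p q)" "\<forall>x\<in>G. \<phi> x \<in> W \<longrightarrow> x = 0"
      "\<forall>t\<in>Tn n. \<exists>x\<in>G. (\<lambda>p q. t p q - \<phi> x p q) \<in> W"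
    and AB: "A * B < c"
    and est: "\<forall>m x. 1 \<le> m \<longrightarrow> x \<in> mat_sp m \<longrightarrow> (\<forall>i j. x i j \<in> G) \<longrightarrow>
           qnorm n W m (\<lambda>r s. \<phi> (x r s)) \<le> A * mn m x \<and>
           mn m x \<le> B * qnorm n W m (\<lambda>r s. \<phi> (x r s))"
    unfolding dcb_Tquot_less_def by blast
  obtain e where e: "e \<in> mat_sp n" "\<forall>p q. e p q \<in> G"
    and e_units: "\<And>p q. p < n \<Longrightarrow> q < n \<Longrightarrow>
        (\<lambda>p' q'. matrix_unit p q p' q' - \<phi> (e p q) p' q') \<in> W"
    and e_inverse: "\<And>t x. t \<in> Tn n \<Longrightarrow> x \<in> G \<Longrightarrow> (\<lambda>p q. t p q - \<phi> x p q) \<in> W \<Longrightarrow>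
        (\<Sum>p<n. \<Sum>q<n. sc (t p q) (e p q)) = x"
    using Tn_quotient_basis[OF G W \<phi>] by blast
  show ?thesis
  proof (cases "0 < B")
    case True
    then show ?thesis
      using slice_lifts_of_quotient_basis[OF W \<phi>(1) e e_units e_inverse AB True] est by blast
  next
    case False
    have "x = 0" if "x \<in> G" for x
    proof -
      define d :: "nat \<Rightarrow> nat \<Rightarrow> 'v" where "d = (\<lambda>i j. if i = 0 \<and> j = 0 then x else 0)"
      have d: "d \<in> mat_sp 1" "\<forall>i j. d i j \<in> G"
        using that subspace_0[OF G] by (auto simp: d_def mat_sp_def)
      then have "mn 1 d \<le> B * qnorm n W 1 (\<lambda>r s. \<phi> (d r s))" using est by blast
      also have "\<dots> \<le> 0"
        using False qnorm_nonneg[OF W] by (simp add: mult_nonpos_nonneg)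
      finally have "d = (\<lambda>i j. 0)" using mn_nonneg[OF d(1)] mn_eq_0D[OF d(1)] by simp
      then show "x = 0" unfolding d_def by (metis (mono_tags))
    qed
    then show ?thesis using slice_lifts_trivial by blast
  qed
qed

end

section \<open>Block diagonal matrices\<close>

definition block_offset :: "(nat \<Rightarrow> nat) \<Rightarrow> nat \<Rightarrow> nat" where
  "block_offset n b = (\<Sum>i<b. Suc (n i))"

text \<open>The gaps of width one between consecutive blocks give b <= block_offset n b, so
  only the blocks with index at most i meet row i.\<close>

definition block_diag :: "(nat \<Rightarrow> nat) \<Rightarrow> (nat \<Rightarrow> nat \<Rightarrow> nat \<Rightarrow> 'a::comm_monoid_add) \<Rightarrow> nat \<Rightarrow> nat \<Rightarrow> 'a" where
  "block_diag n f = (\<lambda>i j. \<Sum>b\<le>i. shift_block (block_offset n b) (n b) (f b) i j)"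

lemma le_block_offset: "b \<le> block_offset n b"
  using sum_mono[of "{..<b}" "\<lambda>_. 1::nat" "\<lambda>i. Suc (n i)"] by (simp add: block_offset_def)

lemma block_offset_mono: "b \<le> b' \<Longrightarrow> block_offset n b \<le> block_offset n b'"
  unfolding block_offset_def by (rule sum_mono2) auto

lemma block_end_less_offset: "b < b' \<Longrightarrow> block_offset n b + n b < block_offset n b'"
  using block_offset_mono[of "Suc b" b' n] by (simp add: block_offset_def)

lemma block_diag_eq_sum:
  assumes "i < block_offset n L"
  shows "block_diag n f i j = (\<Sum>b<L. shift_block (block_offset n b) (n b) (f b) i j)"
proof -
  have vanish: "shift_block (block_offset n b) (n b) (f b) i j = 0" if "i < block_offset n b" for b
    using that by (simp add: shift_block_def)
  have "block_diag n f i j = (\<Sum>b<Suc i + L. shift_block (block_offset n b) (n b) (f b) i j)"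
    unfolding block_diag_def
    by (rule sum.mono_neutral_left) (auto intro!: vanish order.strict_trans2[OF _ le_block_offset])
  also have "\<dots> = (\<Sum>b<L. shift_block (block_offset n b) (n b) (f b) i j)"
    by (intro sum.mono_neutral_right) (auto intro!: vanish order.strict_trans2[OF assms block_offset_mono])
  finally show ?thesis .
qed

lemma block_diag_shift:
  assumes "p < n b" "q < n b"
  shows "block_diag n f (block_offset n b + p) (block_offset n b + q) = f b p q"
proof -
  have "block_offset n b + p < block_offset n (Suc b)"
    using assms by (simp add: block_offset_def)
  then have "block_diag n f (block_offset n b + p) (block_offset n b + q)
      = (\<Sum>b'<Suc b. shift_block (block_offset n b') (n b') (f b')
          (block_offset n b + p) (block_offset n b + q))"
    by (rule block_diag_eq_sum)
  also have "\<dots> = shift_block (block_offset n b) (n b) (f b) (block_offset n b + p) (block_offset n b + q)"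
  proof -
    have "shift_block (block_offset n b') (n b') (f b') (block_offset n b + p) (block_offset n b + q) = 0"
      if "b' < b" for b'
      using block_end_less_offset[OF that, of n] by (simp add: shift_block_def)
    then show ?thesis by (simp add: sum.neutral)
  qed
  also have "\<dots> = f b p q"
    using assms by (simp add: shift_block_def)
  finally show ?thesis .
qed

lemma trunc_block_diag_diff:
  fixes f :: "nat \<Rightarrow> nat \<Rightarrow> nat \<Rightarrow> 'a::ab_group_add"
  assumes N: "block_offset n J \<le> N" and NM: "N \<le> M"
  shows "trunc M (block_diag n f) i j - trunc N (block_diag n f) i j
    = (\<Sum>b\<in>{J..<M}. trunc M (shift_block (block_offset n b) (n b) (f b)) i j
        - trunc N (shift_block (block_offset n b) (n b) (f b)) i j)"
proof (cases "i < M \<and> j < M")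
  case True
  define P where "P b = shift_block (block_offset n b) (n b) (f b)" for b
  have "block_diag n f i j = (\<Sum>b<M. P b i j)"
    unfolding P_def using True le_block_offset[of M n] by (intro block_diag_eq_sum) simp
  then have "trunc M (block_diag n f) i j - trunc N (block_diag n f) i j
      = (\<Sum>b<M. trunc M (P b) i j - trunc N (P b) i j)"
    using True by (cases "i < N \<and> j < N") (auto simp: trunc_def sum_subtractf)
  also have "\<dots> = (\<Sum>b\<in>{J..<M}. trunc M (P b) i j - trunc N (P b) i j)"
  proof (rule sum.mono_neutral_right)
    show "\<forall>b\<in>{..<M} - {J..<M}. trunc M (P b) i j - trunc N (P b) i j = 0"
    proof
      fix b assume "b \<in> {..<M} - {J..<M}"
      then have "b < J" by auto
      then have "block_offset n b + n b \<le> N"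
        using block_end_less_offset[of b J n] N by simp
      then show "trunc M (P b) i j - trunc N (P b) i j = 0"
        using True by (auto simp: trunc_def P_def shift_block_def)
    qed
  qed auto
  finally show ?thesis unfolding P_def .
next
  case False
  then show ?thesis using NM by (auto simp: trunc_def intro!: sum.neutral)
qed

lemma tnorm_shifted_blocks_le:
  "tnorm (block_offset n J) k (\<lambda>r s p q. \<Sum>b<J. shift_block (block_offset n b) (n b) (\<sigma> b r s) p q)
    \<le> (\<Sum>b<J. tnorm (n b) k (\<sigma> b))"
proof -
  have "tnorm (block_offset n J) k (\<lambda>r s p q. \<Sum>b<J. shift_block (block_offset n b) (n b) (\<sigma> b r s) p q)
      \<le> (\<Sum>b<J. tnorm (block_offset n J) k (\<lambda>r s. shift_block (block_offset n b) (n b) (\<sigma> b r s)))"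
    by (rule tnorm_sum_le) simp
  also have "\<dots> \<le> (\<Sum>b<J. tnorm (n b) k (\<sigma> b))"
    using block_end_less_offset[of _ J n] by (intro sum_mono tnorm_shift_block_le) (simp add: less_imp_le)
  finally show ?thesis .
qed

context opspace
begin

lemma slice_block_diag:
  "slice sc k (block_offset n J) (\<lambda>r s p q. \<Sum>b<J. shift_block (block_offset n b) (n b) (\<sigma> b r s) p q)
      (block_diag n f)
    = (\<lambda>r s. \<Sum>b<J. slice sc k (n b) (\<sigma> b) (f b) r s)"
proof -
  have "slice sc k (block_offset n J) (\<lambda>r s. shift_block (block_offset n b) (n b) (\<sigma> b r s)) (block_diag n f)
      = slice sc k (n b) (\<sigma> b) (f b)" if "b < J" for b
  proof -
    have "block_offset n b + n b \<le> block_offset n J"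
      using block_end_less_offset[OF that, of n] by simp
    then have "slice sc k (block_offset n J) (\<lambda>r s. shift_block (block_offset n b) (n b) (\<sigma> b r s))
        (block_diag n f)
      = slice sc k (n b) (\<sigma> b) (\<lambda>p q. block_diag n f (block_offset n b + p) (block_offset n b + q))"
      by (rule slice_shift_block_coeffs)
    also have "\<dots> = slice sc k (n b) (\<sigma> b) (f b)"
      by (rule slice_cong_right) (rule block_diag_shift)
    finally show ?thesis .
  qed
  then show ?thesis by (simp add: slice_sum_coeffs)
qed

lemma mn_trunc_shift_block_le:
  assumes "x \<in> mat_sp N" "L \<le> M"
  shows "mn M (trunc L (shift_block off N x)) \<le> mn N x"
proof -
  define P where "P i = (i < L \<and> off \<le> i \<and> i < off + N)" for i
  have eq: "trunc L (shift_block off N x)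
      = (\<lambda>i j. if i < M \<and> j < M \<and> P i \<and> P j then x (i - off) (j - off) else 0)"
    using assms(2) by (auto simp: fun_eq_iff trunc_def shift_block_def P_def)
  have inj: "inj_on (\<lambda>i. i - off) {i. i < M \<and> P i}"
    by (auto simp: inj_on_def P_def)
  show ?thesis
    unfolding eq by (rule mn_submatrix_le[OF assms(1) inj _ inj]) (auto simp: P_def)
qed

lemma block_diag_mem_KV:
  assumes f: "\<And>b. f b \<in> mat_sp (n b)" and summable: "summable (\<lambda>b. mn (n b) (f b))"
  shows "block_diag n f \<in> KV mn"
  unfolding KV_def mem_Collect_eq
proof (intro allI impI)
  fix \<epsilon> :: real assume "0 < \<epsilon>"
  then obtain J where J: "\<And>M. norm (\<Sum>b\<in>{J..<M}. mn (n b) (f b)) < \<epsilon> / 2"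
    using summable unfolding summable_Cauchy by (metis half_gt_zero order_refl)
  define P where "P b = shift_block (block_offset n b) (n b) (f b)" for b
  show "\<exists>N0. \<forall>N M. N0 \<le> N \<longrightarrow> N \<le> M \<longrightarrow>
      mn M (\<lambda>i j. trunc M (block_diag n f) i j - trunc N (block_diag n f) i j) < \<epsilon>"
  proof (intro exI allI impI)
    fix N M assume N: "block_offset n J \<le> N" and NM: "N \<le> M"
    have trunc_sp: "trunc L (P b) \<in> mat_sp M" if "L \<le> M" for L b
      using that by (auto simp: trunc_def mat_sp_def)
    have "mn M (\<lambda>i j. trunc M (block_diag n f) i j - trunc N (block_diag n f) i j)
        = mn M (\<lambda>i j. \<Sum>b\<in>{J..<M}. trunc M (P b) i j - trunc N (P b) i j)"
      unfolding trunc_block_diag_diff[OF N NM] P_def ..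
    also have "\<dots> \<le> (\<Sum>b\<in>{J..<M}. mn M (\<lambda>i j. trunc M (P b) i j - trunc N (P b) i j))"
      using NM by (intro mn_sum_le mat_sp_diff trunc_sp) auto
    also have "\<dots> \<le> (\<Sum>b\<in>{J..<M}. 2 * mn (n b) (f b))"
    proof (rule sum_mono)
      fix b
      have "mn M (\<lambda>i j. trunc M (P b) i j - trunc N (P b) i j) \<le> mn M (trunc M (P b)) + mn M (trunc N (P b))"
        using NM by (intro mn_diff_le trunc_sp) auto
      also have "\<dots> \<le> 2 * mn (n b) (f b)"
        using mn_trunc_shift_block_le[OF f[of b], of M M "block_offset n b"]
          mn_trunc_shift_block_le[OF f[of b] NM, of "block_offset n b"]
        unfolding P_def by linarith
      finally show "mn M (\<lambda>i j. trunc M (P b) i j - trunc N (P b) i j) \<le> 2 * mn (n b) (f b)" .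
    qed
    also have "\<dots> = 2 * norm (\<Sum>b\<in>{J..<M}. mn (n b) (f b))"
      using mn_nonneg[OF f] by (simp add: sum_distrib_left sum_nonneg)
    also have "\<dots> < \<epsilon>" using J[of M] by simp
    finally show "mn M (\<lambda>i j. trunc M (block_diag n f) i j - trunc N (block_diag n f) i j) < \<epsilon>" .
  qed
qed

lemma scaled_block_diag_mem_KV:
  assumes "\<And>b. e b \<in> mat_sp (n b)" "\<And>b. mn (n b) (e b) \<le> 1"
  shows "block_diag n (\<lambda>b p q. sc (of_real (M * (1/2)^b)) (e b p q)) \<in> KV mn"
proof (rule block_diag_mem_KV)
  show "(\<lambda>p q. sc (of_real (M * (1/2)^b)) (e b p q)) \<in> mat_sp (n b)" for b
    using assms(1) by (simp add: mat_sp_def)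
  have bound: "norm (mn (n b) (\<lambda>p q. sc (of_real (M * (1/2)^b)) (e b p q))) \<le> \<bar>M\<bar> * (1/2)^b" for b
  proof -
    have "mn (n b) (\<lambda>p q. sc (of_real (M * (1/2)^b)) (e b p q)) = \<bar>M\<bar> * (1/2)^b * mn (n b) (e b)"
      using mn_scale[OF assms(1), of b "of_real (M * (1/2)^b)"] by (simp only: norm_of_real abs_mult) simp
    then show ?thesis
      using assms(2)[of b] mn_nonneg[OF assms(1)] by (simp add: mult_left_le)
  qed
  have "summable (\<lambda>b. \<bar>M\<bar> * (1/2::real)^b)"
    by (intro summable_mult summable_geometric) simp
  then show "summable (\<lambda>b. mn (n b) (\<lambda>p q. sc (of_real (M * (1/2)^b)) (e b p q)))"
    by (rule summable_comparison_test'[where N = 0]) (rule bound)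
qed

lemma sum_slices_mem_amc_hull:
  assumes t: "\<And>b. 0 < t b" and bound: "(\<Sum>b<J. tnorm (n b) k (\<sigma> b) / t b) \<le> 1"
  shows "(\<lambda>r s. \<Sum>b<J. slice sc k (n b) (\<sigma> b) (e b) r s)
    \<in> amc_hull sc k (block_diag n (\<lambda>b p q. sc (of_real (t b)) (e b p q)))"
proof -
  define \<tau> where "\<tau> = (\<lambda>r s p q. \<Sum>b<J. shift_block (block_offset n b) (n b)
      (\<lambda>p q. of_real (1 / t b) * \<sigma> b r s p q) p q)"
  have slice_eq: "(\<lambda>r s. \<Sum>b<J. slice sc k (n b) (\<sigma> b) (e b) r s)
      = slice sc k (block_offset n J) \<tau> (block_diag n (\<lambda>b p q. sc (of_real (t b)) (e b p q)))"
    unfolding \<tau>_def slice_block_diag slice_scale_right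
    using t by (simp add: less_imp_neq[symmetric] flip: of_real_mult)
  have norm_le: "tnorm (block_offset n J) k \<tau> \<le> 1"
  proof -
    have "tnorm (block_offset n J) k \<tau> \<le> (\<Sum>b<J. tnorm (n b) k (\<lambda>r s p q. of_real (1 / t b) * \<sigma> b r s p q))"
      unfolding \<tau>_def by (rule tnorm_shifted_blocks_le)
    also have "\<dots> \<le> (\<Sum>b<J. tnorm (n b) k (\<sigma> b) / t b)"
    proof (rule sum_mono)
      fix b
      have "tnorm (n b) k (\<lambda>r s p q. of_real (1 / t b) * \<sigma> b r s p q)
          \<le> cmod (of_real (1 / t b)) * tnorm (n b) k (\<sigma> b)"
        by (rule tnorm_scale_le)
      also have "\<dots> = tnorm (n b) k (\<sigma> b) / t b"
        using t[of b] by (simp only: norm_of_real) simp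
      finally show "tnorm (n b) k (\<lambda>r s p q. of_real (1 / t b) * \<sigma> b r s p q) \<le> tnorm (n b) k (\<sigma> b) / t b" .
    qed
    finally show ?thesis using bound by linarith
  qed
  have support: "\<tau> r s p q = 0" if "block_offset n J \<le> p \<or> block_offset n J \<le> q" for r s p q
  proof -
    have "shift_block (block_offset n b) (n b) g p q = 0" if "b < J" for b and g :: "nat \<Rightarrow> nat \<Rightarrow> complex"
      using block_end_less_offset[OF that, of n] \<open>block_offset n J \<le> p \<or> block_offset n J \<le> q\<close>
      by (auto simp: shift_block_def)
    then show ?thesis by (simp add: \<tau>_def)
  qed
  show ?thesis
    unfolding amc_hull_def mem_Collect_eq using slice_eq norm_le support
    by (intro exI[of _ "block_offset n J"] exI[of _ \<tau>] conjI allI impI) auto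
qed

end

section \<open>Approximation by telescoping sums\<close>

lemma sum_quarter_powers_weighted_le:
  fixes a :: "nat \<Rightarrow> real"
  assumes a: "\<And>b. a b \<le> C * (1/4)^b" and M: "2 * C \<le> M" and "0 < M"
  shows "(\<Sum>b<J. a b / (M * (1/2)^b)) \<le> 1"
proof -
  have "(\<Sum>b<J. a b / (M * (1/2)^b)) \<le> (\<Sum>b<J. (1/2)^b / 2)"
  proof (rule sum_mono)
    fix b
    have "a b \<le> C * (1/4)^b" by (rule a)
    also have "\<dots> \<le> M / 2 * (1/4)^b"
      using M by (intro mult_right_mono) auto
    also have "\<dots> = M / 2 * (1/2)^b * (1/2)^b"
      by (simp add: power_mult_distrib[symmetric])
    finally show "a b / (M * (1/2)^b) \<le> (1/2)^b / 2"
      using \<open>0 < M\<close> by (simp add: divide_le_eq field_simps)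
  qed
  also have "\<dots> \<le> 1"
    by (simp add: sum_divide_distrib[symmetric] sum_gp_strict)
  finally show ?thesis .
qed

lemma completely_compact_subspace_sequence:
  assumes cc: "completely_compact sc mn K" and \<epsilon>: "\<And>b. 0 < \<epsilon> b"
  obtains V where "\<And>b. fin_dim_subspace sc (V b)"
    "\<And>b k y. 1 \<le> k \<Longrightarrow> y \<in> K k \<Longrightarrow> \<exists>z\<in>mat_sp k. (\<forall>i j. z i j \<in> V b) \<and>
      mn k (\<lambda>i j. y i j - z i j) < \<epsilon> b"
proof -
  have "\<forall>b. \<exists>V. fin_dim_subspace sc V \<and> (\<forall>k\<ge>1. \<forall>y\<in>K k. \<exists>z\<in>mat_sp k. (\<forall>i j. z i j \<in> V) \<and>
      mn k (\<lambda>i j. y i j - z i j) < \<epsilon> b)"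
    using cc[unfolded completely_compact_def, THEN conjunct2, THEN conjunct2, rule_format, OF \<epsilon>]
    by blast
  from choice[OF this] obtain V where "\<forall>b. fin_dim_subspace sc (V b) \<and> (\<forall>k\<ge>1. \<forall>y\<in>K k.
      \<exists>z\<in>mat_sp k. (\<forall>i j. z i j \<in> V b) \<and> mn k (\<lambda>i j. y i j - z i j) < \<epsilon> b)"
    by blast
  then show thesis using that by blast
qed

context opspace
begin

lemma increments_lift:
  assumes lifts: "\<And>b. slice_lifts sc mn c (n b) (e b) (G b)" and G: "\<And>b. subspace (G b)"
    and k: "1 \<le> k" and y: "y \<in> mat_sp k"
    and z: "\<And>b. z b \<in> mat_sp k" "\<And>b i j. z b i j \<in> G b" "\<And>b i j. z (Suc b) i j \<in> G b"
    and approx: "\<And>b. mn k (\<lambda>i j. z b i j - y i j) \<le> R * (1/4)^b" and R: "0 < R"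
  obtains \<sigma> where "\<And>b. slice sc k (n b) (\<sigma> b) (e b) = (\<lambda>i j. z (Suc b) i j - z b i j)"
    "\<And>b. tnorm (n b) k (\<sigma> b) \<le> (2 * max c 0 + 1) * R * (1/4)^b"
proof -
  have "\<exists>\<sigma>. slice sc k (n b) \<sigma> (e b) = (\<lambda>i j. z (Suc b) i j - z b i j) \<and>
      tnorm (n b) k \<sigma> \<le> (2 * max c 0 + 1) * R * (1/4)^b" for b
  proof -
    define d where "d = (\<lambda>i j. z (Suc b) i j - z b i j)"
    have d: "d \<in> mat_sp k" "\<forall>i j. d i j \<in> G b"
      using z G by (auto simp: d_def intro: mat_sp_diff subspace_diff)
    have "d = (\<lambda>i j. (z (Suc b) i j - y i j) + (y i j - z b i j))"
      by (simp add: d_def)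
    then have "mn k d \<le> mn k (\<lambda>i j. z (Suc b) i j - y i j) + mn k (\<lambda>i j. y i j - z b i j)"
      using mn_add_le[OF mat_sp_diff[OF z(1) y] mat_sp_diff[OF y z(1)]] by simp
    also have "\<dots> \<le> R * (1/4)^Suc b + R * (1/4)^b"
      using approx[of "Suc b"] approx[of b] mn_diff_commute[OF y z(1)] by simp
    also have "\<dots> \<le> 2 * R * (1/4)^b"
      using R by simp
    finally have d_norm: "mn k d \<le> 2 * R * (1/4)^b" .
    have "0 < R * (1/4)^b" using R by simp
    with lifts[of b] k d obtain \<sigma> where
      \<sigma>: "tnorm (n b) k \<sigma> < c * mn k d + R * (1/4)^b" "slice sc k (n b) \<sigma> (e b) = d"
      unfolding slice_lifts_def by blast
    have "c * mn k d \<le> max c 0 * (2 * R * (1/4)^b)"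
      using d_norm mn_nonneg[OF d(1)] by (intro order_trans[OF mult_right_mono mult_left_mono]) auto
    with \<sigma> show ?thesis
      unfolding d_def by (intro exI[of _ \<sigma>]) (auto simp: algebra_simps)
  qed
  then obtain \<sigma> where "\<And>b. slice sc k (n b) (\<sigma> b) (e b) = (\<lambda>i j. z (Suc b) i j - z b i j) \<and>
      tnorm (n b) k (\<sigma> b) \<le> (2 * max c 0 + 1) * R * (1/4)^b"
    by metis
  then show thesis using that by blast
qed

lemma mem_mclosure_amc_hull_block_diag:
  assumes lifts: "\<And>b. slice_lifts sc mn c (n b) (e b) (G b)" and G: "\<And>b. subspace (G b)"
    and k: "1 \<le> k" and y: "y \<in> mat_sp k"
    and z: "\<And>b. z b \<in> mat_sp k" "z 0 = (\<lambda>i j. 0)"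
      "\<And>b i j. z b i j \<in> G b" "\<And>b i j. z (Suc b) i j \<in> G b"
    and approx: "\<And>b. mn k (\<lambda>i j. z b i j - y i j) \<le> R * (1/4)^b" and R: "0 < R"
    and M: "2 * (2 * max c 0 + 1) * R \<le> M"
  shows "y \<in> mclosure mn k (amc_hull sc k (block_diag n (\<lambda>b p q. sc (of_real (M * (1/2)^b)) (e b p q))))"
  unfolding mclosure_def mem_Collect_eq
proof (intro conjI allI impI)
  show "y \<in> mat_sp k" by (rule y)
  fix \<epsilon> :: real assume "0 < \<epsilon>"
  obtain \<sigma> where \<sigma>: "\<And>b. slice sc k (n b) (\<sigma> b) (e b) = (\<lambda>i j. z (Suc b) i j - z b i j)"
    and \<sigma>_norm: "\<And>b. tnorm (n b) k (\<sigma> b) \<le> (2 * max c 0 + 1) * R * (1/4)^b"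
    using increments_lift[OF lifts G k y z(1,3,4) approx R] by blast
  obtain J where J: "(1/4::real)^J < \<epsilon> / R"
    using real_arch_pow_inv[of "\<epsilon> / R" "1/4"] \<open>0 < \<epsilon>\<close> R by auto
  have M_pos: "0 < M" using M R by (smt (verit) mult_pos_pos)
  have "(\<Sum>b<J. tnorm (n b) k (\<sigma> b) / (M * (1/2)^b)) \<le> 1"
    using \<sigma>_norm M M_pos
    by (intro sum_quarter_powers_weighted_le[where C = "(2 * max c 0 + 1) * R"]) (simp_all add: algebra_simps)
  then have "(\<lambda>r s. \<Sum>b<J. slice sc k (n b) (\<sigma> b) (e b) r s)
      \<in> amc_hull sc k (block_diag n (\<lambda>b p q. sc (of_real (M * (1/2)^b)) (e b p q)))"
    using M_pos by (intro sum_slices_mem_amc_hull) auto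
  moreover have "(\<lambda>r s. \<Sum>b<J. slice sc k (n b) (\<sigma> b) (e b) r s) = z J"
  proof -
    have "(\<Sum>b<J. z (Suc b) r s - z b r s) = z J r s" for r s
      using sum_lessThan_telescope[of "\<lambda>b. z b r s" J] z(2) by simp
    then show ?thesis by (simp add: \<sigma> fun_eq_iff)
  qed
  moreover have "mn k (\<lambda>i j. z J i j - y i j) < \<epsilon>"
    using approx[of J] J R by (simp add: pos_less_divide_eq mult.commute order.strict_trans1)
  ultimately show "\<exists>x\<in>amc_hull sc k (block_diag n (\<lambda>b p q. sc (of_real (M * (1/2)^b)) (e b p q))).
      mn k (\<lambda>i j. x i j - y i j) < \<epsilon>"
    by auto
qed

lemma subcoexact_lift_chain:
  assumes sub: "subcoexact sc mn lam" and V: "\<And>b. fin_dim_subspace sc (V b)"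
  obtains G n e where "\<And>b. subspace (G b)" "\<And>b. V b \<subseteq> G b" "\<And>b. V (Suc b) \<subseteq> G b"
    "\<And>b. slice_lifts sc mn (lam + 1) (n b) (e b) (G b)"
proof -
  have "\<exists>G n e. subspace G \<and> V b \<subseteq> G \<and> V (Suc b) \<subseteq> G \<and> slice_lifts sc mn (lam + 1) n e G" for b
  proof -
    obtain B B' where B: "finite B" "V b = span B" "finite B'" "V (Suc b) = span B'"
      using V unfolding fin_dim_subspace_def by metis
    then have "fin_dim_subspace sc (span (B \<union> B'))"
      unfolding fin_dim_subspace_def by (auto intro: subspace_span)
    with sub obtain G where G: "fin_dim_subspace sc G" "span (B \<union> B') \<subseteq> G" "coexact sc mn lam G"
      unfolding subcoexact_def by blast
    obtain m W where "csubspace_Tn m W" "dcb_Tquot_less sc mn G m W (lam + 1)"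
      using G(3) unfolding coexact_def by (meson zero_less_one)
    then obtain e where "slice_lifts sc mn (lam + 1) m e G"
      using dcb_Tquot_less_imp_slice_lifts G(1) unfolding fin_dim_subspace_def by blast
    moreover have "V b \<subseteq> G" "V (Suc b) \<subseteq> G"
      using G(2) span_mono[of B "B \<union> B'"] span_mono[of B' "B \<union> B'"] B by auto
    ultimately show ?thesis using G(1) unfolding fin_dim_subspace_def by blast
  qed
  then obtain G n e where "\<And>b. subspace (G b) \<and> V b \<subseteq> G b \<and> V (Suc b) \<subseteq> G b \<and>
      slice_lifts sc mn (lam + 1) (n b) (e b) (G b)"
    by metis
  then show thesis using that by blast
qed

lemma completely_compact_approximations:
  assumes K: "matrix_set K" and cc: "completely_compact sc mn K"
  obtains R V where "0 < R" "\<And>b. fin_dim_subspace sc (V b)"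
    "\<And>k y. 1 \<le> k \<Longrightarrow> y \<in> K k \<Longrightarrow> \<exists>z. z 0 = (\<lambda>i j. 0) \<and> (\<forall>b. z b \<in> mat_sp k \<and>
        (\<forall>i j. z b i j \<in> V b) \<and> mn k (\<lambda>i j. z b i j - y i j) \<le> R * (1/4)^b)"
proof -
  obtain C where C: "\<And>k y. 1 \<le> k \<Longrightarrow> y \<in> K k \<Longrightarrow> mn k y \<le> C"
    using cc unfolding completely_compact_def completely_bounded_def by blast
  define R where "R = max C 1"
  have R_pos: "0 < R * (1/4)^b" for b by (simp add: R_def)
  obtain V where V: "\<And>b. fin_dim_subspace sc (V b)"
    and V_approx: "\<And>b k y. 1 \<le> k \<Longrightarrow> y \<in> K k \<Longrightarrow> \<exists>z\<in>mat_sp k. (\<forall>i j. z i j \<in> V b) \<and>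
      mn k (\<lambda>i j. y i j - z i j) < R * (1/4)^b"
    by (rule completely_compact_subspace_sequence[where \<epsilon> = "\<lambda>b. R * (1/4)^b", OF cc R_pos]) blast
  show thesis
  proof (rule that)
    show "0 < R" by (simp add: R_def)
    show "fin_dim_subspace sc (V b)" for b by (rule V)
    fix k y assume k: "1 \<le> k" and y: "y \<in> K k"
    have y_sp: "y \<in> mat_sp k" using K k y unfolding matrix_set_def by blast
    have "\<forall>b. \<exists>z. z \<in> mat_sp k \<and> (\<forall>i j. z i j \<in> V b) \<and> mn k (\<lambda>i j. z i j - y i j) \<le> R * (1/4)^b"
    proof
      fix b
      obtain z where z: "z \<in> mat_sp k" "\<forall>i j. z i j \<in> V b" "mn k (\<lambda>i j. y i j - z i j) < R * (1/4)^b"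
        using V_approx[OF k y, of b] by blast
      moreover have "mn k (\<lambda>i j. z i j - y i j) = mn k (\<lambda>i j. y i j - z i j)"
        by (rule mn_diff_commute[OF z(1) y_sp])
      ultimately show "\<exists>z. z \<in> mat_sp k \<and> (\<forall>i j. z i j \<in> V b) \<and> mn k (\<lambda>i j. z i j - y i j) \<le> R * (1/4)^b"
        by (intro exI[of _ z]) simp
    qed
    from choice[OF this] obtain z where z: "\<forall>b. z b \<in> mat_sp k \<and> (\<forall>i j. z b i j \<in> V b) \<and>
        mn k (\<lambda>i j. z b i j - y i j) \<le> R * (1/4)^b"
      by blast
    have "mn k (\<lambda>i j. 0 - y i j) \<le> R * (1/4)^0"
      using mn_minus[OF y_sp] C[OF k y] by (simp add: R_def)
    moreover have "0 \<in> V 0" using V[of 0] subspace_0 unfolding fin_dim_subspace_def by blast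
    ultimately show "\<exists>z. z 0 = (\<lambda>i j. 0) \<and> (\<forall>b. z b \<in> mat_sp k \<and>
        (\<forall>i j. z b i j \<in> V b) \<and> mn k (\<lambda>i j. z b i j - y i j) \<le> R * (1/4)^b)"
      using z mat_sp_zero by (intro exI[of _ "\<lambda>b. if b = 0 then (\<lambda>i j. 0) else z b"]) auto
  qed
qed

end

theorem theorem6p4:
  fixes sc :: "complex \<Rightarrow> 'v::ab_group_add \<Rightarrow> 'v"
    and mn :: "nat \<Rightarrow> (nat \<Rightarrow> nat \<Rightarrow> 'v) \<Rightarrow> real"
    and lam :: real
    and K :: "nat \<Rightarrow> (nat \<Rightarrow> nat \<Rightarrow> 'v) set"
  assumes "operator_space sc mn"
    and "subcoexact sc mn lam"
    and "matrix_set K"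
    and "completely_compact sc mn K"
  shows "operator_compact sc mn K"
proof -
  interpret opspace sc mn by (rule opspace.intro) (rule assms(1))
  obtain R V where R: "0 < R" and V: "\<And>b. fin_dim_subspace sc (V b)"
    and approx: "\<And>k y. 1 \<le> k \<Longrightarrow> y \<in> K k \<Longrightarrow> \<exists>z. z 0 = (\<lambda>i j. 0) \<and> (\<forall>b. z b \<in> mat_sp k \<and>
        (\<forall>i j. z b i j \<in> V b) \<and> mn k (\<lambda>i j. z b i j - y i j) \<le> R * (1/4)^b)"
    by (rule completely_compact_approximations[OF assms(3,4)]) blast
  obtain G n e where G: "\<And>b. subspace (G b)" "\<And>b. V b \<subseteq> G b" "\<And>b. V (Suc b) \<subseteq> G b"
    and lifts: "\<And>b. slice_lifts sc mn (lam + 1) (n b) (e b) (G b)"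
    by (rule subcoexact_lift_chain[OF assms(2), of V]) (rule V, blast)
  define x where
    "x = block_diag n (\<lambda>b p q. sc (of_real (2 * (2 * max (lam + 1) 0 + 1) * R * (1/2)^b)) (e b p q))"
  have "x \<in> KV mn"
    using lifts unfolding x_def slice_lifts_def by (intro scaled_block_diag_mem_KV) auto
  moreover have "y \<in> mclosure mn k (amc_hull sc k x)" if k: "1 \<le> k" and y: "y \<in> K k" for k y
  proof -
    obtain z where z: "z 0 = (\<lambda>i j. 0)" "\<And>b. z b \<in> mat_sp k" "\<And>b i j. z b i j \<in> V b"
      and z_approx: "\<And>b. mn k (\<lambda>i j. z b i j - y i j) \<le> R * (1/4)^b"
      using approx[OF k y] by blast
    have "y \<in> mat_sp k" using assms(3) k y unfolding matrix_set_def by blast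
    with z G show ?thesis unfolding x_def
      by (intro mem_mclosure_amc_hull_block_diag[OF lifts G(1) k _ z(2,1) _ _ z_approx R]) blast+
  qed
  ultimately show ?thesis
    using assms(4) unfolding operator_compact_def completely_compact_def by blast
qed

end
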